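(* Let $\Gamma$ be a finite connected tetravalent $G$-half-arc-transitive graph for some $G\le\mathrm{Aut}(\Gamma)$ having at least three $G$-alternating cycles, and let $r=\mathrm{rad}_G(\Gamma)$, $a=\mathrm{att}_G(\Gamma)$. Then the graph $\mathrm{Alt}_G(\Gamma)$ is regular of valence $2r/a$, and the induced action of $G$ on $\mathrm{Alt}_G(\Gamma)$ is vertex- and edge-transitive. Moreover, this action is arc-transitive if and only if $a$ does not divide $r$.
   Context: All graphs are finite and simple. For a tetravalent graph $\Gamma$ and $G\le \mathrm{Aut}(\Gamma)$, $\Gamma$ is $G$-half-arc-transitive if $G$ acts transitively on vertices and edges but not on arcs. Then the $G$-orbits on arcs give two paired orientations of the edges, and for each, every vertex is the tail of two and the head of two incident edges. A $G$-alternating cycle is a cycle in which every two consecutive edges have a common head or a common tail. All $G$-alternating cycles have the same length $2\,\mathrm{rad}_G(\Gamma)$, and any two $G$-alternating cycles sharing a vertex meet in the same number $\mathrm{att}_G(\Gamma)$ of vertices; it is known that $\mathrm{att}_G(\Gamma)$ divides $2\,\mathrm{rad}_G(\Gamma)$. The graph of $G$-alternating cycles $\mathrm{Alt}_G(\Gamma)$ has the $G$-alternating cycles of $\Gamma$ as vertices, two being adjacent whenever they have at least one vertex in common; $G$ acts on it naturally. *)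

theory Defs
  imports Complex_Main "HOL-Algebra.Bij"
begin

definition simple_graph :: "'a set \<Rightarrow> ('a \<Rightarrow> 'a \<Rightarrow> bool) \<Rightarrow> bool" where
  "simple_graph V E \<longleftrightarrow> finite V \<and> (\<forall>u v. E u v \<longrightarrow> u \<in> V \<and> v \<in> V)
     \<and> (\<forall>u v. E u v \<longrightarrow> E v u) \<and> (\<forall>u. \<not> E u u)"

definition connected_graph :: "'a set \<Rightarrow> ('a \<Rightarrow> 'a \<Rightarrow> bool) \<Rightarrow> bool" where
  "connected_graph V E \<longleftrightarrow> V \<noteq> {} \<and> (\<forall>u\<in>V. \<forall>v\<in>V. E\<^sup>*\<^sup>* u v)"

definition tetravalent :: "'a set \<Rightarrow> ('a \<Rightarrow> 'a \<Rightarrow> bool) \<Rightarrow> bool" where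
  "tetravalent V E \<longleftrightarrow> (\<forall>v\<in>V. card {u\<in>V. E v u} = 4)"

definition Aut :: "'a set \<Rightarrow> ('a \<Rightarrow> 'a \<Rightarrow> bool) \<Rightarrow> ('a \<Rightarrow> 'a) set" where
  "Aut V E = {g \<in> Bij V. \<forall>u\<in>V. \<forall>v\<in>V. E u v \<longleftrightarrow> E (g u) (g v)}"

definition arcs :: "'a set \<Rightarrow> ('a \<Rightarrow> 'a \<Rightarrow> bool) \<Rightarrow> ('a \<times> 'a) set" where
  "arcs V E = {(u, v). u \<in> V \<and> v \<in> V \<and> E u v}"

definition edges :: "'a set \<Rightarrow> ('a \<Rightarrow> 'a \<Rightarrow> bool) \<Rightarrow> 'a set set" where
  "edges V E = {{u, v} | u v. u \<in> V \<and> v \<in> V \<and> E u v}"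

definition vertex_transitive :: "('a \<Rightarrow> 'a) set \<Rightarrow> 'a set \<Rightarrow> bool" where
  "vertex_transitive G V \<longleftrightarrow> (\<forall>u\<in>V. \<forall>v\<in>V. \<exists>g\<in>G. g u = v)"

definition edge_transitive :: "('a \<Rightarrow> 'a) set \<Rightarrow> 'a set \<Rightarrow> ('a \<Rightarrow> 'a \<Rightarrow> bool) \<Rightarrow> bool" where
  "edge_transitive G V E \<longleftrightarrow> (\<forall>e\<in>edges V E. \<forall>f\<in>edges V E. \<exists>g\<in>G. g ` e = f)"

definition arc_transitive :: "('a \<Rightarrow> 'a) set \<Rightarrow> 'a set \<Rightarrow> ('a \<Rightarrow> 'a \<Rightarrow> bool) \<Rightarrow> bool" where
  "arc_transitive G V E \<longleftrightarrow>
     (\<forall>(u, v)\<in>arcs V E. \<forall>(x, y)\<in>arcs V E. \<exists>g\<in>G. g u = x \<and> g v = y)"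

definition half_arc_transitive ::
  "'a set \<Rightarrow> ('a \<Rightarrow> 'a \<Rightarrow> bool) \<Rightarrow> ('a \<Rightarrow> 'a) set \<Rightarrow> bool" where
  "half_arc_transitive V E G \<longleftrightarrow>
     vertex_transitive G V \<and> edge_transitive G V E \<and> \<not> arc_transitive G V E"

text \<open>The G-orbit of an arc; an orientation is the G-orbit of a chosen arc
(the two G-orbits on arcs are paired, and both give the same alternating cycles).\<close>

definition arc_orbit :: "('a \<Rightarrow> 'a) set \<Rightarrow> 'a \<times> 'a \<Rightarrow> ('a \<times> 'a) set" where
  "arc_orbit G a = {(g (fst a), g (snd a)) | g. g \<in> G}"

definition orientation ::
  "'a set \<Rightarrow> ('a \<Rightarrow> 'a \<Rightarrow> bool) \<Rightarrow> ('a \<Rightarrow> 'a) set \<Rightarrow> ('a \<times> 'a) set" where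
  "orientation V E G = arc_orbit G (SOME a. a \<in> arcs V E)"

definition is_cycle_list :: "'a set \<Rightarrow> ('a \<Rightarrow> 'a \<Rightarrow> bool) \<Rightarrow> 'a list \<Rightarrow> bool" where
  "is_cycle_list V E vs \<longleftrightarrow> length vs \<ge> 3 \<and> distinct vs \<and> set vs \<subseteq> V \<and>
     (\<forall>i < length vs. E (vs ! i) (vs ! ((i + 1) mod length vs)))"

definition alternating_list :: "('a \<times> 'a) set \<Rightarrow> 'a list \<Rightarrow> bool" where
  "alternating_list Ori vs \<longleftrightarrow>
     (\<forall>i < length vs.
        let n = length vs; p = vs ! ((i + n - 1) mod n); c = vs ! i; s = vs ! ((i + 1) mod n)
        in ((p, c) \<in> Ori \<and> (s, c) \<in> Ori) \<or> ((c, p) \<in> Ori \<and> (c, s) \<in> Ori))"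

definition cycle_edges :: "'a list \<Rightarrow> 'a set set" where
  "cycle_edges vs = {{vs ! i, vs ! ((i + 1) mod length vs)} | i. i < length vs}"

definition alt_cycles ::
  "'a set \<Rightarrow> ('a \<Rightarrow> 'a \<Rightarrow> bool) \<Rightarrow> ('a \<Rightarrow> 'a) set \<Rightarrow> 'a set set set" where
  "alt_cycles V E G = {cycle_edges vs | vs.
      is_cycle_list V E vs \<and> alternating_list (orientation V E G) vs}"

definition cverts :: "'a set set \<Rightarrow> 'a set" where
  "cverts C = \<Union> C"

text \<open>rad: half the common length of the G-alternating cycles.\<close>

definition rad :: "'a set \<Rightarrow> ('a \<Rightarrow> 'a \<Rightarrow> bool) \<Rightarrow> ('a \<Rightarrow> 'a) set \<Rightarrow> nat" where
  "rad V E G = card (SOME C. C \<in> alt_cycles V E G) div 2"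

text \<open>att: the common number of vertices in which two distinct G-alternating
cycles sharing a vertex meet.\<close>

definition att :: "'a set \<Rightarrow> ('a \<Rightarrow> 'a \<Rightarrow> bool) \<Rightarrow> ('a \<Rightarrow> 'a) set \<Rightarrow> nat" where
  "att V E G = (let CD = (SOME (C, D). C \<in> alt_cycles V E G \<and> D \<in> alt_cycles V E G \<and>
        C \<noteq> D \<and> cverts C \<inter> cverts D \<noteq> {})
     in card (cverts (fst CD) \<inter> cverts (snd CD)))"

definition alt_adj ::
  "'a set \<Rightarrow> ('a \<Rightarrow> 'a \<Rightarrow> bool) \<Rightarrow> ('a \<Rightarrow> 'a) set \<Rightarrow> 'a set set \<Rightarrow> 'a set set \<Rightarrow> bool" where
  "alt_adj V E G C D \<longleftrightarrow> C \<in> alt_cycles V E G \<and> D \<in> alt_cycles V E G \<and>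
     C \<noteq> D \<and> cverts C \<inter> cverts D \<noteq> {}"

definition cyc_act :: "('a \<Rightarrow> 'a) \<Rightarrow> 'a set set \<Rightarrow> 'a set set" where
  "cyc_act g C = (\<lambda>e. g ` e) ` C"

end

theory Submission
  imports Defs
begin

(* Every vertex x lies on exactly two G-alternating cycles: its head cycle, whose two edges at x
   both point into x, and its tail cycle, whose two edges at x both point away from x.  Hence two
   alternating cycles are adjacent in Alt exactly when they are the head and the tail cycle of a
   common vertex, and vertex-transitivity of G on the graph makes the action on Alt vertex- and
   edge-transitive.  The vertices a cycle C shares with its neighbours split C into blocks of size
   att, which gives the valence 2 rad / att.

   Along C heads and tails alternate.  An element of G fixing a common vertex of C and a neighbour D
   and swapping its two C-neighbours fixes both C and D, and acts on C as a reflection; so the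
   indices of the common vertices form a residue class modulo some d with att = 2 rad / d.  The
   action on Alt is arc-transitive iff the roles of C and D are swapped at some common vertex, i.e.
   iff d is odd, i.e. iff att does not divide rad. *)

section \<open>Integer sets closed under reflections\<close>

lemma reflection_closed_int_multiples:
  fixes T :: "int set"
  assumes "0 \<in> T" and "d \<in> T" and reflect: "\<And>i j. i \<in> T \<Longrightarrow> j \<in> T \<Longrightarrow> 2 * i - j \<in> T"
  shows "k * d \<in> T"
proof -
  have nat_multiples: "int m * d \<in> T \<and> int (m + 1) * d \<in> T" for m
  proof (induction m)
    case 0
    then show ?case using assms(1,2) by simp
  next
    case (Suc m)
    then have "2 * (int (m + 1) * d) - int m * d \<in> T" using reflect by blast
    moreover have "2 * (int (m + 1) * d) - int m * d = int (Suc m + 1) * d"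
      by (simp add: algebra_simps)
    ultimately show ?case using Suc by simp
  qed
  show ?thesis
  proof (cases "0 \<le> k")
    case True
    then show ?thesis using nat_multiples[of "nat k"] by simp
  next
    case False
    have "2 * 0 - int (nat (- k)) * d \<in> T"
      using reflect[OF assms(1)] nat_multiples[of "nat (- k)"] by blast
    then show ?thesis using False by simp
  qed
qed

lemma reflection_closed_int_set_eq_multiples:
  fixes T :: "int set" and n :: int
  assumes "0 < n" and "0 \<in> T" and "n \<in> T"
    and reflect: "\<And>i j. i \<in> T \<Longrightarrow> j \<in> T \<Longrightarrow> 2 * i - j \<in> T"
  shows "\<exists>d>0. d dvd n \<and> T = {j. d dvd j}"
proof -
  define d where "d = int (LEAST m. 0 < m \<and> int m \<in> T)"
  have "0 < nat n \<and> int (nat n) \<in> T" using assms by simp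
  then have "0 < d" and "d \<in> T" unfolding d_def by (metis (mono_tags, lifting) LeastI of_nat_0_less_iff)+
  have no_smaller: "e \<notin> T" if "0 < e" "e < d" for e
    using that not_less_Least[of "nat e" "\<lambda>m. 0 < m \<and> int m \<in> T"] unfolding d_def by auto
  have multiple: "k * d \<in> T" for k
    using reflection_closed_int_multiples[OF assms(2) \<open>d \<in> T\<close> reflect] .
  have dvd: "d dvd e" if "e \<in> T" for e
  proof -
    define m where "m = e mod (2 * d)"
    have "2 * (e div (2 * d) * d) - e \<in> T" using reflect[OF multiple that] .
    then have "2 * 0 - (2 * (e div (2 * d) * d) - e) \<in> T" using reflect[OF assms(2)] by blast
    moreover have "2 * 0 - (2 * (e div (2 * d) * d) - e) = m"
      unfolding m_def by (simp add: algebra_simps minus_div_mult_eq_mod[symmetric])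
    ultimately have "m \<in> T" by simp
    moreover have "2 * d - m \<in> T" using reflect[OF \<open>d \<in> T\<close> \<open>m \<in> T\<close>] .
    moreover have "0 \<le> m" "m < 2 * d" using \<open>0 < d\<close> unfolding m_def by simp_all
    ultimately have "m = 0 \<or> m = d" using no_smaller[of m] no_smaller[of "2 * d - m"] by fastforce
    then show ?thesis
      unfolding m_def by (metis dvd_mod_imp_dvd dvd_refl dvd_triv_right mult.commute dvd_0_right)
  qed
  have "T = {j. d dvd j}" using dvd multiple by (auto elim!: dvdE simp: mult.commute)
  then show ?thesis using \<open>0 < d\<close> dvd[OF assms(3)] by blast
qed

lemma reflection_closed_int_set_eq_residue_class:
  fixes S :: "int set" and n s :: int
  assumes "0 < n" and "s \<in> S" and "s + n \<in> S"
    and reflect: "\<And>i j. i \<in> S \<Longrightarrow> j \<in> S \<Longrightarrow> 2 * i - j \<in> S"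
  shows "\<exists>d>0. d dvd n \<and> S = {j. d dvd j - s}"
proof -
  define T where "T = (\<lambda>j. j - s) ` S"
  have T_iff: "j \<in> T \<longleftrightarrow> j + s \<in> S" for j
    unfolding T_def by (auto intro: rev_image_eqI)
  have "2 * i - j \<in> T" if "i \<in> T" "j \<in> T" for i j
    using reflect[of "i + s" "j + s"] that unfolding T_iff by (simp add: algebra_simps)
  moreover have "0 \<in> T" "n \<in> T" using assms(2,3) unfolding T_iff by (simp_all add: add.commute)
  ultimately obtain d where "0 < d" "d dvd n" "T = {j. d dvd j}"
    using reflection_closed_int_set_eq_multiples[OF assms(1)] by blast
  moreover have "S = {j. j - s \<in> T}" using T_iff by simp
  ultimately show ?thesis by auto
qed

lemma card_residue_class_atLeastLessThan:
  fixes d n s :: int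
  assumes "0 < d" and "d dvd n"
  shows "card {j \<in> {0..<n}. d dvd j - s} = nat (n div d)"
proof -
  define r where "r = s mod d"
  have "{j \<in> {0..<n}. d dvd j - s} = (\<lambda>k. r + d * k) ` {0..<n div d}"
  proof (intro Set.set_eqI iffI)
    fix j assume "j \<in> {j \<in> {0..<n}. d dvd j - s}"
    then have j: "0 \<le> j" "j < n" "j mod d = r"
      unfolding r_def by (auto simp: mod_eq_dvd_iff)
    then have "j div d \<in> {0..<n div d}"
      using assms by (auto simp: pos_imp_zdiv_nonneg_iff elim!: dvdE)
        (smt (verit, ccfv_SIG) mult_div_mod_eq mult_left_less_imp_less pos_mod_sign)
    moreover have "j = r + d * (j div d)" using j(3) by (metis mod_div_mult_eq add.commute mult.commute)
    ultimately show "j \<in> (\<lambda>k. r + d * k) ` {0..<n div d}" by blast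
  next
    fix j assume "j \<in> (\<lambda>k. r + d * k) ` {0..<n div d}"
    then obtain k where k: "0 \<le> k" "k < n div d" "j = r + d * k" by auto
    have "d * (k + 1) \<le> n" using k(2) assms by (auto elim!: dvdE)
    moreover have "0 \<le> r" "r < d" using assms(1) unfolding r_def by simp_all
    ultimately have "0 \<le> j \<and> j < n" using k assms(1) by (simp add: algebra_simps)
    moreover have "d dvd j - s"
      using k(3) unfolding r_def by (simp add: mod_eq_dvd_iff[symmetric] mod_add_left_eq)
    ultimately show "j \<in> {j \<in> {0..<n}. d dvd j - s}" by simp
  qed
  moreover have "inj_on (\<lambda>k. r + d * k) {0..<n div d}" using assms(1) by (simp add: inj_on_def)
  ultimately show ?thesis by (simp add: card_image)
qed

lemma dvd_half_iff_even_cofactor: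
  fixes n d a :: int
  assumes "0 < a" and "n = d * a" and "even n"
  shows "a dvd n div 2 \<longleftrightarrow> even d"
proof
  assume "a dvd n div 2"
  then obtain m where "n div 2 = a * m" by (auto elim: dvdE)
  then have "d * a = (2 * m) * a" using assms(2,3) by (metis dvd_mult_div_cancel mult.assoc mult.commute)
  then show "even d" using assms(1) by simp
next
  assume "even d"
  then show "a dvd n div 2" using assms(2) by (auto elim!: evenE)
qed

section \<open>Cyclic lists and their edge sets\<close>

definition cnth :: "'a list \<Rightarrow> int \<Rightarrow> 'a" where
  "cnth vs j = vs ! nat (j mod int (length vs))"

lemma cnth_cong: "i mod int (length vs) = j mod int (length vs) \<Longrightarrow> cnth vs i = cnth vs j"
  by (simp add: cnth_def)

lemma cnth_mod [simp]: "cnth vs (j mod int (length vs)) = cnth vs j"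
  by (simp add: cnth_def)

lemma cnth_add_length [simp]: "cnth vs (j + int (length vs)) = cnth vs j"
  by (simp add: cnth_def)

lemma cnth_of_nat: "i < length vs \<Longrightarrow> cnth vs (int i) = vs ! i"
  by (simp add: cnth_def)

lemma cnth_in_set: "vs \<noteq> [] \<Longrightarrow> cnth vs j \<in> set vs"
  by (simp add: cnth_def nat_less_iff)

lemma set_eq_range_cnth: "vs \<noteq> [] \<Longrightarrow> set vs = range (cnth vs)"
  using cnth_in_set by (fastforce simp: in_set_conv_nth cnth_of_nat[symmetric])

lemma cnth_eq_iff:
  assumes "distinct vs" and "vs \<noteq> []"
  shows "cnth vs i = cnth vs j \<longleftrightarrow> i mod int (length vs) = j mod int (length vs)"
proof -
  have "cnth vs i = cnth vs j \<longleftrightarrow> nat (i mod int (length vs)) = nat (j mod int (length vs))"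
    unfolding cnth_def using assms nth_eq_iff_index_eq[OF assms(1)] by (simp add: nat_less_iff)
  then show ?thesis using assms(2) by (simp add: eq_nat_nat_iff)
qed

lemma nth_succ_mod_eq_cnth:
  assumes "vs \<noteq> []"
  shows "vs ! ((nat (j mod int (length vs)) + 1) mod length vs) = cnth vs (j + 1)"
proof -
  have "int ((nat (j mod int (length vs)) + 1) mod length vs) = (j + 1) mod int (length vs)"
    using assms by (simp add: zmod_int) (metis mod_add_left_eq add.commute)
  then show ?thesis unfolding cnth_def by (metis nat_int)
qed

lemma nth_pred_mod_eq_cnth:
  assumes "vs \<noteq> []"
  shows "vs ! ((nat (j mod int (length vs)) + length vs - 1) mod length vs) = cnth vs (j - 1)"
proof -
  have "int (nat (j mod int (length vs)) + length vs - 1) = j mod int (length vs) + int (length vs) - 1"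
    using assms by (simp add: of_nat_diff Suc_leI)
  then have "int ((nat (j mod int (length vs)) + length vs - 1) mod length vs)
      = (j mod int (length vs) + int (length vs) - 1) mod int (length vs)"
    by (simp add: zmod_int)
  also have "\<dots> = (j + int (length vs) - 1) mod int (length vs)"
    by (metis add_diff_eq mod_add_left_eq)
  also have "\<dots> = (j - 1) mod int (length vs)" by (metis add.commute add_diff_eq mod_add_self1)
  finally show ?thesis unfolding cnth_def by (metis nat_int)
qed

lemma cnth_pred_ne_succ:
  assumes "distinct vs" and "3 \<le> length vs"
  shows "cnth vs (j - 1) \<noteq> cnth vs (j + 1)"
proof
  assume "cnth vs (j - 1) = cnth vs (j + 1)"
  moreover have "vs \<noteq> []" using assms(2) by auto
  ultimately have "(j - 1) mod int (length vs) = (j + 1) mod int (length vs)"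
    using cnth_eq_iff[OF assms(1)] by blast
  then have "int (length vs) dvd 2" by (simp add: mod_eq_dvd_iff)
  then have "length vs dvd 2" by (metis int_dvd_int_iff of_nat_numeral)
  then show False using assms(2) by (auto dest: dvd_imp_le)
qed

lemma cycle_edges_eq_image_nth:
  "cycle_edges vs = (\<lambda>i. {vs ! i, vs ! ((i + 1) mod length vs)}) ` {..<length vs}"
  unfolding cycle_edges_def by auto

lemma cycle_edges_eq_image_cnth:
  assumes "vs \<noteq> []"
  shows "cycle_edges vs = (\<lambda>j. {cnth vs j, cnth vs (j + 1)}) ` {0..<int (length vs)}"
proof -
  have "{vs ! i, vs ! ((i + 1) mod length vs)} = {cnth vs (int i), cnth vs (int i + 1)}"
    if "i < length vs" for i
    using that assms nth_succ_mod_eq_cnth[of vs "int i"] by (simp add: cnth_of_nat)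
  then have "cycle_edges vs = (\<lambda>i. {cnth vs (int i), cnth vs (int i + 1)}) ` {..<length vs}"
    unfolding cycle_edges_eq_image_nth by (rule image_cong[OF refl]) simp
  also have "\<dots> = (\<lambda>j. {cnth vs j, cnth vs (j + 1)}) ` int ` {..<length vs}"
    by (simp only: image_image)
  also have "int ` {..<length vs} = {0..<int (length vs)}"
    by (simp add: atLeast0LessThan[symmetric] image_int_atLeastLessThan)
  finally show ?thesis .
qed

lemma cycle_edges_eq_range_cnth:
  assumes "vs \<noteq> []"
  shows "cycle_edges vs = range (\<lambda>j. {cnth vs j, cnth vs (j + 1)})"
proof -
  have "{cnth vs j, cnth vs (j + 1)} \<in> cycle_edges vs" for j
  proof -
    have "j mod int (length vs) \<in> {0..<int (length vs)}" using assms by simp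
    moreover have "cnth vs (j mod int (length vs) + 1) = cnth vs (j + 1)"
      by (metis cnth_mod mod_add_left_eq)
    ultimately show ?thesis unfolding cycle_edges_eq_image_cnth[OF assms]
      by (auto intro!: image_eqI[where x = "j mod int (length vs)"])
  qed
  then show ?thesis unfolding cycle_edges_eq_image_cnth[OF assms] by blast
qed

lemma cverts_cycle_edges: "vs \<noteq> [] \<Longrightarrow> cverts (cycle_edges vs) = set vs"
  unfolding cverts_def cycle_edges_eq_range_cnth set_eq_range_cnth by auto

lemma card_cycle_edges:
  assumes "distinct vs" and "3 \<le> length vs"
  shows "card (cycle_edges vs) = length vs"
proof -
  have ne: "vs \<noteq> []" using assms(2) by auto
  have "inj_on (\<lambda>j. {cnth vs j, cnth vs (j + 1)}) {0..<int (length vs)}"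
  proof (rule inj_onI)
    fix i j assume "i \<in> {0..<int (length vs)}" "j \<in> {0..<int (length vs)}"
      and eq: "{cnth vs i, cnth vs (i + 1)} = {cnth vs j, cnth vs (j + 1)}"
    show "i = j"
    proof (cases "cnth vs i = cnth vs j")
      case True
      then show ?thesis using \<open>i \<in> _\<close> \<open>j \<in> _\<close> cnth_eq_iff[OF assms(1) ne] by simp
    next
      case False
      then have "cnth vs i = cnth vs (j + 1)" "cnth vs (i + 1) = cnth vs j"
        using eq by (auto simp: doubleton_eq_iff)
      then have "cnth vs (j - 1) = cnth vs (j + 1)"
        using cnth_eq_iff[OF assms(1) ne] by (metis add_diff_cancel_right' mod_diff_cong)
      then show ?thesis using cnth_pred_ne_succ[OF assms] by blast
    qed
  qed
  then show ?thesis unfolding cycle_edges_eq_image_cnth[OF ne] by (simp add: card_image)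
qed

definition cycle_nbrs :: "'a set set \<Rightarrow> 'a \<Rightarrow> 'a set" where
  "cycle_nbrs C x = {y. {x, y} \<in> C}"

lemma cycle_nbrs_cycle_edges:
  assumes "distinct vs" and "vs \<noteq> []"
  shows "cycle_nbrs (cycle_edges vs) (cnth vs j) = {cnth vs (j - 1), cnth vs (j + 1)}"
proof (intro Set.set_eqI iffI)
  fix y assume "y \<in> cycle_nbrs (cycle_edges vs) (cnth vs j)"
  then obtain i where i: "{cnth vs j, y} = {cnth vs i, cnth vs (i + 1)}"
    unfolding cycle_nbrs_def cycle_edges_eq_range_cnth[OF assms(2)] by auto
  show "y \<in> {cnth vs (j - 1), cnth vs (j + 1)}"
  proof (cases "cnth vs j = cnth vs i")
    case True
    then have "cnth vs (j + 1) = cnth vs (i + 1)"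
      using cnth_eq_iff[OF assms] by (metis mod_add_cong)
    then show ?thesis using i True by (auto simp: doubleton_eq_iff)
  next
    case False
    then have "cnth vs j = cnth vs (i + 1)" and "y = cnth vs i"
      using i by (auto simp: doubleton_eq_iff)
    then have "cnth vs (j - 1) = cnth vs i"
      using cnth_eq_iff[OF assms] by (metis add_diff_cancel_right' mod_diff_cong)
    then show ?thesis using \<open>y = _\<close> by simp
  qed
next
  fix y assume y: "y \<in> {cnth vs (j - 1), cnth vs (j + 1)}"
  have "{cnth vs (j - 1), cnth vs (j - 1 + 1)} \<in> cycle_edges vs"
    "{cnth vs j, cnth vs (j + 1)} \<in> cycle_edges vs"
    unfolding cycle_edges_eq_range_cnth[OF assms(2)] by blast+
  then show "y \<in> cycle_nbrs (cycle_edges vs) (cnth vs j)"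
    using y unfolding cycle_nbrs_def by (auto simp: insert_commute)
qed

lemma cyc_act_cycle_edges: "cyc_act g (cycle_edges vs) = cycle_edges (map g vs)"
proof -
  have pointwise: "g ` {vs ! i, vs ! ((i + 1) mod length vs)}
      = {map g vs ! i, map g vs ! ((i + 1) mod length (map g vs))}" if "i < length vs" for i
  proof -
    have "(i + 1) mod length vs < length vs" using that by (intro mod_less_divisor) auto
    then show ?thesis using that by simp
  qed
  show ?thesis unfolding cyc_act_def cycle_edges_eq_image_nth image_image
    by (rule image_cong) (simp, rule pointwise, simp)
qed

lemma is_cycle_list_map:
  assumes "is_cycle_list V E vs" and "inj_on f (set vs)" and "\<And>x. x \<in> set vs \<Longrightarrow> f x \<in> W"
    and "\<And>x y. x \<in> set vs \<Longrightarrow> y \<in> set vs \<Longrightarrow> E x y \<Longrightarrow> E' (f x) (f y)"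
  shows "is_cycle_list W E' (map f vs)"
  unfolding is_cycle_list_def
proof (intro conjI allI impI)
  fix i assume i: "i < length (map f vs)"
  then have "(i + 1) mod length vs < length vs" by (intro mod_less_divisor) auto
  then show "E' (map f vs ! i) (map f vs ! ((i + 1) mod length (map f vs)))"
    using i assms(1,4) unfolding is_cycle_list_def by auto
qed (use assms in \<open>auto simp: is_cycle_list_def distinct_map\<close>)

lemma alternating_list_map:
  assumes "\<And>x y. (x, y) \<in> R \<Longrightarrow> (f x, f y) \<in> R'" and "alternating_list R vs"
  shows "alternating_list R' (map f vs)"
  unfolding alternating_list_def Let_def length_map
proof (intro allI impI)
  fix i assume i: "i < length vs"
  then have "0 < length vs" by linarith
  then have "(i + length vs - 1) mod length vs < length vs" "(i + 1) mod length vs < length vs" by simp_all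
  with i show "(map f vs ! ((i + length vs - 1) mod length vs), map f vs ! i) \<in> R'
      \<and> (map f vs ! ((i + 1) mod length vs), map f vs ! i) \<in> R'
    \<or> (map f vs ! i, map f vs ! ((i + length vs - 1) mod length vs)) \<in> R'
      \<and> (map f vs ! i, map f vs ! ((i + 1) mod length vs)) \<in> R'"
    using assms(2)[unfolded alternating_list_def Let_def, rule_format, OF i] assms(1) by auto
qed

lemma cverts_cyc_act: "cverts (cyc_act g C) = g ` cverts C"
  unfolding cverts_def cyc_act_def by auto

lemma cycle_nbrs_cyc_act:
  assumes "inj_on g A" and "cverts C \<subseteq> A" and "x \<in> A"
  shows "cycle_nbrs (cyc_act g C) (g x) = g ` cycle_nbrs C x"
proof (intro Set.set_eqI iffI)
  fix y assume "y \<in> cycle_nbrs (cyc_act g C) (g x)"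
  then obtain e where "e \<in> C" and e: "{g x, y} = g ` e"
    unfolding cycle_nbrs_def cyc_act_def by auto
  then have "e \<subseteq> A" using assms(2) unfolding cverts_def by blast
  moreover obtain z where "z \<in> e" "y = g z" using e by (metis imageE insertI1 insert_commute)
  ultimately have "g ` e = g ` {x, z}" using e assms(3) by auto
  then have "e = {x, z}" using assms(1) \<open>e \<subseteq> A\<close> \<open>z \<in> e\<close> \<open>x \<in> A\<close>
    by (meson inj_on_image_eq_iff empty_subsetI insert_subset subsetD)
  then show "y \<in> g ` cycle_nbrs C x"
    using \<open>e \<in> C\<close> \<open>y = g z\<close> unfolding cycle_nbrs_def by blast
next
  fix y assume "y \<in> g ` cycle_nbrs C x"
  then obtain z where "{x, z} \<in> C" "y = g z" unfolding cycle_nbrs_def by blast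
  then have "g ` {x, z} \<in> cyc_act g C" unfolding cyc_act_def by blast
  then show "y \<in> cycle_nbrs (cyc_act g C) (g x)" using \<open>y = g z\<close> by (simp add: cycle_nbrs_def)
qed

section \<open>Orientation and alternating cycles\<close>

locale tetravalent_half_arc_transitive =
  fixes V :: "'a set" and E :: "'a \<Rightarrow> 'a \<Rightarrow> bool" and G :: "('a \<Rightarrow> 'a) set"
  assumes simple: "simple_graph V E" and tetravalent: "tetravalent V E"
    and subgroup: "subgroup G (BijGroup V)" and automorphisms: "G \<subseteq> Aut V E"
    and half_arc_transitive: "half_arc_transitive V E G"
    and three_alt_cycles: "card (alt_cycles V E G) \<ge> 3"
begin

abbreviation "ACs \<equiv> alt_cycles V E G"
abbreviation "Ori \<equiv> orientation V E G"
abbreviation "alt_list vs \<equiv> is_cycle_list V E vs \<and> alternating_list Ori vs"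

lemma finite_V: "finite V"
  using simple by (simp add: simple_graph_def)

lemma adj_in_V: "E u v \<Longrightarrow> u \<in> V \<and> v \<in> V"
  using simple by (simp add: simple_graph_def)

lemma adj_sym: "E u v \<Longrightarrow> E v u"
  using simple by (simp add: simple_graph_def)

lemma G_in_Bij: "g \<in> G \<Longrightarrow> g \<in> Bij V"
  using subgroup.subset[OF subgroup] by (auto simp: BijGroup_def)

lemma G_bij_betw: "g \<in> G \<Longrightarrow> bij_betw g V V"
  using G_in_Bij by (simp add: Bij_def)

lemma G_inj_on: "g \<in> G \<Longrightarrow> inj_on g V"
  using G_bij_betw bij_betw_imp_inj_on by blast

lemma G_image: "g \<in> G \<Longrightarrow> g ` V = V"
  using G_bij_betw bij_betw_imp_surj_on by blast

lemma G_in_V: "g \<in> G \<Longrightarrow> x \<in> V \<Longrightarrow> g x \<in> V"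
  using G_image by blast

lemma G_adj_iff: "g \<in> G \<Longrightarrow> u \<in> V \<Longrightarrow> v \<in> V \<Longrightarrow> E (g u) (g v) \<longleftrightarrow> E u v"
  using automorphisms by (auto simp: Aut_def)

lemma card_G_image: "g \<in> G \<Longrightarrow> A \<subseteq> V \<Longrightarrow> card (g ` A) = card A"
  using G_inj_on card_image inj_on_subset by metis

lemma G_comp_closed:
  assumes "g \<in> G" and "h \<in> G"
  shows "\<exists>k\<in>G. \<forall>x\<in>V. k x = g (h x)"
proof -
  have "g \<otimes>\<^bsub>BijGroup V\<^esub> h \<in> G" using subgroup.m_closed[OF subgroup assms] .
  moreover have "g \<otimes>\<^bsub>BijGroup V\<^esub> h = compose V g h"
    using G_in_Bij[OF assms(1)] G_in_Bij[OF assms(2)] by (simp add: BijGroup_def)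
  ultimately have "restrict (\<lambda>x. g (h x)) V \<in> G" by (simp add: compose_def)
  then show ?thesis by (rule bexI[rotated]) simp
qed

lemma G_inv_closed:
  assumes "g \<in> G"
  shows "\<exists>k\<in>G. \<forall>x\<in>V. k (g x) = x"
proof -
  have "inv\<^bsub>BijGroup V\<^esub> g \<in> G" using subgroup.m_inv_closed[OF subgroup assms] .
  moreover have "inv\<^bsub>BijGroup V\<^esub> g = (\<lambda>x\<in>V. inv_into V g x)"
    using inv_BijGroup[OF G_in_Bij[OF assms]] .
  ultimately have "restrict (inv_into V g) V \<in> G" by simp
  then show ?thesis by (rule bexI[rotated]) (simp add: G_in_V[OF assms] inv_into_f_f[OF G_inj_on[OF assms]])
qed

lemma G_vertex_transitive: "x \<in> V \<Longrightarrow> y \<in> V \<Longrightarrow> \<exists>g\<in>G. g x = y"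
  using half_arc_transitive unfolding half_arc_transitive_def vertex_transitive_def by blast

lemma alt_cycles_iff: "C \<in> ACs \<longleftrightarrow> (\<exists>vs. C = cycle_edges vs \<and> alt_list vs)"
  unfolding alt_cycles_def by blast

lemma ex_alt_list: "\<exists>vs. alt_list vs"
proof -
  have "ACs \<noteq> {}" using three_alt_cycles by auto
  then show ?thesis unfolding alt_cycles_def by blast
qed

lemma finite_ACs: "finite ACs"
  using three_alt_cycles by (metis card.infinite not_numeral_le_zero)

lemma alt_list_distinct: "alt_list vs \<Longrightarrow> distinct vs"
  and alt_list_length: "alt_list vs \<Longrightarrow> 3 \<le> length vs"
  and alt_list_nonempty: "alt_list vs \<Longrightarrow> vs \<noteq> []"
  unfolding is_cycle_list_def by auto

lemma alt_list_adj:
  assumes "alt_list vs"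
  shows "E (cnth vs j) (cnth vs (j + 1))"
proof -
  have "nat (j mod int (length vs)) < length vs"
    using alt_list_nonempty[OF assms] by (simp add: nat_less_iff)
  then show ?thesis
    using assms nth_succ_mod_eq_cnth[OF alt_list_nonempty[OF assms], of j]
    unfolding is_cycle_list_def cnth_def by metis
qed

lemma alt_list_in_V: "alt_list vs \<Longrightarrow> cnth vs j \<in> V"
  by (metis alt_list_nonempty cnth_in_set is_cycle_list_def subsetD)

lemma orientation_eq_orbit:
  obtains a b where "a \<in> V" "b \<in> V" "E a b" and "Ori = {(g a, g b) | g. g \<in> G}"
proof -
  obtain vs where "alt_list vs" using ex_alt_list by blast
  then have "(cnth vs 0, cnth vs 1) \<in> arcs V E"
    using alt_list_adj[of vs 0] alt_list_in_V by (simp add: arcs_def)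
  then have "(SOME a. a \<in> arcs V E) \<in> arcs V E" by (rule someI)
  moreover obtain a b where ab: "(SOME a. a \<in> arcs V E) = (a, b)" by fastforce
  ultimately have "a \<in> V" "b \<in> V" "E a b" by (simp_all add: arcs_def)
  moreover have "Ori = {(g a, g b) | g. g \<in> G}"
    unfolding orientation_def arc_orbit_def ab by simp
  ultimately show ?thesis by (rule that)
qed

lemma orientation_arc:
  assumes "(x, y) \<in> Ori"
  shows "x \<in> V \<and> y \<in> V \<and> E x y"
proof (rule orientation_eq_orbit)
  fix a b assume "a \<in> V" "b \<in> V" "E a b" and Ori: "Ori = {(g a, g b) | g. g \<in> G}"
  then obtain g where "g \<in> G" "x = g a" "y = g b" using assms by blast
  then show ?thesis using G_in_V G_adj_iff \<open>a \<in> V\<close> \<open>b \<in> V\<close> \<open>E a b\<close> by simp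
qed

lemma orientation_image: "(x, y) \<in> Ori \<Longrightarrow> g \<in> G \<Longrightarrow> (g x, g y) \<in> Ori"
proof (rule orientation_eq_orbit)
  fix a b assume "a \<in> V" "b \<in> V" and Ori: "Ori = {(g a, g b) | g. g \<in> G}"
  assume "(x, y) \<in> Ori" "g \<in> G"
  then obtain h where "h \<in> G" "x = h a" "y = h b" using Ori by blast
  moreover obtain k where "k \<in> G" "\<forall>z\<in>V. k z = g (h z)" using G_comp_closed \<open>g \<in> G\<close> \<open>h \<in> G\<close> by blast
  moreover have "(k a, k b) \<in> Ori" using Ori \<open>k \<in> G\<close> by blast
  ultimately show "(g x, g y) \<in> Ori" using \<open>a \<in> V\<close> \<open>b \<in> V\<close> by simp
qed

lemma orientation_image_iff:
  assumes "g \<in> G" and "x \<in> V" and "y \<in> V"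
  shows "(g x, g y) \<in> Ori \<longleftrightarrow> (x, y) \<in> Ori"
proof
  obtain k where "k \<in> G" "\<forall>z\<in>V. k (g z) = z" using G_inv_closed[OF assms(1)] by blast
  then show "(g x, g y) \<in> Ori \<Longrightarrow> (x, y) \<in> Ori"
    using orientation_image[of "g x" "g y" k] assms(2,3) by simp
qed (use orientation_image assms in blast)

lemma orientation_transitive:
  assumes "(x, y) \<in> Ori" and "(x', y') \<in> Ori"
  shows "\<exists>g\<in>G. g x = x' \<and> g y = y'"
proof (rule orientation_eq_orbit)
  fix a b assume "a \<in> V" "b \<in> V" and Ori: "Ori = {(g a, g b) | g. g \<in> G}"
  obtain h where "h \<in> G" "x = h a" "y = h b" using assms(1) Ori by blast
  obtain k where "k \<in> G" "x' = k a" "y' = k b" using assms(2) Ori by blast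
  obtain h' where "h' \<in> G" "\<forall>z\<in>V. h' (h z) = z" using G_inv_closed[OF \<open>h \<in> G\<close>] by blast
  obtain g where "g \<in> G" "\<forall>z\<in>V. g z = k (h' z)" using G_comp_closed[OF \<open>k \<in> G\<close> \<open>h' \<in> G\<close>] by blast
  moreover have "g x = x'" "g y = y'"
    using \<open>\<forall>z\<in>V. g z = k (h' z)\<close> \<open>\<forall>z\<in>V. h' (h z) = z\<close> \<open>x = h a\<close> \<open>y = h b\<close>
      \<open>x' = k a\<close> \<open>y' = k b\<close> G_in_V[OF \<open>h \<in> G\<close>] \<open>a \<in> V\<close> \<open>b \<in> V\<close> by simp_all
  ultimately show ?thesis by blast
qed

lemma orientation_total: "E x y \<Longrightarrow> (x, y) \<in> Ori \<or> (y, x) \<in> Ori"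
proof (rule orientation_eq_orbit)
  fix a b assume "a \<in> V" "b \<in> V" "E a b" and Ori: "Ori = {(g a, g b) | g. g \<in> G}"
  assume "E x y"
  then have "{a, b} \<in> edges V E" "{x, y} \<in> edges V E"
    using \<open>a \<in> V\<close> \<open>b \<in> V\<close> \<open>E a b\<close> adj_in_V unfolding edges_def by blast+
  then obtain g where "g \<in> G" "{g a, g b} = {x, y}"
    using half_arc_transitive unfolding half_arc_transitive_def edge_transitive_def by fastforce
  then show "(x, y) \<in> Ori \<or> (y, x) \<in> Ori" using Ori by (auto simp: doubleton_eq_iff)
qed

text \<open>If an arc and its reverse were both in the orientation, every arc would be, so G would be
  arc-transitive.\<close>

lemma orientation_asym: "(x, y) \<in> Ori \<Longrightarrow> (y, x) \<notin> Ori"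
proof
  assume "(x, y) \<in> Ori" "(y, x) \<in> Ori"
  have "(p, q) \<in> Ori" if "E p q" for p q
  proof -
    have "(q, p) \<in> Ori \<Longrightarrow> (p, q) \<in> Ori"
      using orientation_transitive[OF \<open>(y, x) \<in> Ori\<close>] orientation_image[OF \<open>(x, y) \<in> Ori\<close>] by blast
    then show ?thesis using orientation_total[OF that] by blast
  qed
  then have "arc_transitive G V E"
    unfolding arc_transitive_def arcs_def using orientation_transitive by auto
  then show False using half_arc_transitive unfolding half_arc_transitive_def by blast
qed

definition in_nbrs :: "'a \<Rightarrow> 'a set" where
  "in_nbrs x = {y. (y, x) \<in> Ori}"

definition out_nbrs :: "'a \<Rightarrow> 'a set" where
  "out_nbrs x = {y. (x, y) \<in> Ori}"

lemma in_out_nbrs_disjoint: "in_nbrs x \<inter> out_nbrs x = {}"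
  unfolding in_nbrs_def out_nbrs_def using orientation_asym by blast

lemma in_nbrs_subset: "in_nbrs x \<subseteq> V" and out_nbrs_subset: "out_nbrs x \<subseteq> V"
  using orientation_arc unfolding in_nbrs_def out_nbrs_def by blast+

lemma finite_in_nbrs: "finite (in_nbrs x)" and finite_out_nbrs: "finite (out_nbrs x)"
  using finite_subset[OF in_nbrs_subset finite_V] finite_subset[OF out_nbrs_subset finite_V] .

lemma nbrs_eq_in_Un_out_nbrs: "x \<in> V \<Longrightarrow> {y \<in> V. E x y} = in_nbrs x \<union> out_nbrs x"
  using orientation_total orientation_arc adj_sym unfolding in_nbrs_def out_nbrs_def by blast

lemma in_nbrs_image:
  assumes "g \<in> G" and "x \<in> V"
  shows "in_nbrs (g x) = g ` in_nbrs x"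
proof (intro Set.set_eqI iffI)
  fix z assume z: "z \<in> in_nbrs (g x)"
  then obtain y where "y \<in> V" "z = g y" using in_nbrs_subset G_image[OF assms(1)] by blast
  then show "z \<in> g ` in_nbrs x"
    using z orientation_image_iff[OF assms(1) \<open>y \<in> V\<close> assms(2)] unfolding in_nbrs_def by blast
qed (use orientation_image assms(1) in \<open>auto simp: in_nbrs_def\<close>)

lemma out_nbrs_image:
  assumes "g \<in> G" and "x \<in> V"
  shows "out_nbrs (g x) = g ` out_nbrs x"
proof (intro Set.set_eqI iffI)
  fix z assume z: "z \<in> out_nbrs (g x)"
  then obtain y where "y \<in> V" "z = g y" using out_nbrs_subset G_image[OF assms(1)] by blast
  then show "z \<in> g ` out_nbrs x"
    using z orientation_image_iff[OF assms(1) assms(2) \<open>y \<in> V\<close>] unfolding out_nbrs_def by blast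
qed (use orientation_image assms(1) in \<open>auto simp: out_nbrs_def\<close>)

abbreviation "is_head C x \<equiv> cycle_nbrs C x = in_nbrs x"
abbreviation "is_tail C x \<equiv> cycle_nbrs C x = out_nbrs x"

lemma alt_list_nbrs:
  "alt_list vs \<Longrightarrow> cycle_nbrs (cycle_edges vs) (cnth vs j) = {cnth vs (j - 1), cnth vs (j + 1)}"
  using cycle_nbrs_cycle_edges alt_list_distinct alt_list_nonempty by blast

lemma alt_list_alternates:
  assumes "alt_list vs"
  shows "cycle_nbrs (cycle_edges vs) (cnth vs j) \<subseteq> in_nbrs (cnth vs j)
    \<or> cycle_nbrs (cycle_edges vs) (cnth vs j) \<subseteq> out_nbrs (cnth vs j)"
proof -
  have ne: "vs \<noteq> []" using alt_list_nonempty[OF assms] .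
  define i where "i = nat (j mod int (length vs))"
  have "i < length vs" using ne by (simp add: nat_less_iff i_def)
  then have "(vs ! ((i + length vs - 1) mod length vs), vs ! i) \<in> Ori
        \<and> (vs ! ((i + 1) mod length vs), vs ! i) \<in> Ori
      \<or> (vs ! i, vs ! ((i + length vs - 1) mod length vs)) \<in> Ori
        \<and> (vs ! i, vs ! ((i + 1) mod length vs)) \<in> Ori"
    using assms unfolding alternating_list_def Let_def by blast
  moreover have "vs ! i = cnth vs j" by (simp add: i_def cnth_def)
  ultimately show ?thesis
    unfolding alt_list_nbrs[OF assms] in_nbrs_def out_nbrs_def i_def
      nth_succ_mod_eq_cnth[OF ne] nth_pred_mod_eq_cnth[OF ne] by auto
qed

lemma alt_list_ex_head_tail:
  assumes "alt_list vs"
  shows "\<exists>x\<in>V. \<exists>y\<in>V. 2 \<le> card (in_nbrs x) \<and> 2 \<le> card (out_nbrs y)"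
proof -
  let ?c = "cnth vs"
  have two: "2 \<le> card A" if "?c (j - 1) \<in> A" "?c (j + 1) \<in> A" "finite A" for A j
    using that cnth_pred_ne_succ[OF alt_list_distinct[OF assms] alt_list_length[OF assms], of j]
    by (metis card_2_iff card_mono empty_subsetI insert_subset)
  have alt: "?c (j - 1) \<in> in_nbrs (?c j) \<and> ?c (j + 1) \<in> in_nbrs (?c j)
      \<or> ?c (j - 1) \<in> out_nbrs (?c j) \<and> ?c (j + 1) \<in> out_nbrs (?c j)" for j
    using alt_list_alternates[OF assms, of j] alt_list_nbrs[OF assms, of j] by blast
  have "(?c 0, ?c 1) \<in> Ori \<or> (?c 1, ?c 0) \<in> Ori"
    using orientation_total alt_list_adj[OF assms, of 0] by simp
  then have "?c 1 \<in> out_nbrs (?c 0) \<and> ?c 0 \<in> in_nbrs (?c 1) \<or> ?c 1 \<in> in_nbrs (?c 0) \<and> ?c 0 \<in> out_nbrs (?c 1)"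
    unfolding in_nbrs_def out_nbrs_def by blast
  then have "(?c (0 - 1) \<in> out_nbrs (?c 0) \<and> ?c (0 + 1) \<in> out_nbrs (?c 0)
        \<and> ?c (1 - 1) \<in> in_nbrs (?c 1) \<and> ?c (1 + 1) \<in> in_nbrs (?c 1))
     \<or> (?c (0 - 1) \<in> in_nbrs (?c 0) \<and> ?c (0 + 1) \<in> in_nbrs (?c 0)
        \<and> ?c (1 - 1) \<in> out_nbrs (?c 1) \<and> ?c (1 + 1) \<in> out_nbrs (?c 1))"
    using alt[of 0] alt[of 1] in_out_nbrs_disjoint by auto
  then show ?thesis
    using two finite_in_nbrs finite_out_nbrs alt_list_in_V[OF assms] by metis
qed

lemma card_in_out_nbrs:
  assumes "x \<in> V"
  shows "card (in_nbrs x) = 2" and "card (out_nbrs x) = 2"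
proof -
  obtain vs where "alt_list vs" using ex_alt_list by blast
  then obtain a b where "a \<in> V" "b \<in> V" "2 \<le> card (in_nbrs a)" "2 \<le> card (out_nbrs b)"
    using alt_list_ex_head_tail by blast
  moreover obtain g h where "g \<in> G" "g a = x" "h \<in> G" "h b = x"
    using G_vertex_transitive \<open>a \<in> V\<close> \<open>b \<in> V\<close> assms by metis
  ultimately have "2 \<le> card (in_nbrs x)" "2 \<le> card (out_nbrs x)"
    using in_nbrs_image out_nbrs_image card_G_image in_nbrs_subset out_nbrs_subset by metis+
  moreover have "card (in_nbrs x \<union> out_nbrs x) = 4"
    using tetravalent assms nbrs_eq_in_Un_out_nbrs[OF assms] unfolding tetravalent_def by metis
  then have "card (in_nbrs x) + card (out_nbrs x) = 4"
    using card_Un_disjoint[OF finite_in_nbrs finite_out_nbrs in_out_nbrs_disjoint] by simp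
  ultimately show "card (in_nbrs x) = 2" "card (out_nbrs x) = 2" by linarith+
qed

lemma in_nbrs_ne_out_nbrs: "x \<in> V \<Longrightarrow> in_nbrs x \<noteq> out_nbrs x"
  using in_out_nbrs_disjoint card_in_out_nbrs by (metis Int_absorb card.empty zero_neq_numeral)

lemma alt_list_head_or_tail:
  assumes "alt_list vs"
  shows "is_head (cycle_edges vs) (cnth vs j) \<or> is_tail (cycle_edges vs) (cnth vs j)"
proof -
  have "card (cycle_nbrs (cycle_edges vs) (cnth vs j)) = 2"
    using alt_list_nbrs[OF assms]
      cnth_pred_ne_succ[OF alt_list_distinct[OF assms] alt_list_length[OF assms]] by simp
  then show ?thesis
    using alt_list_alternates[OF assms, of j] card_in_out_nbrs[OF alt_list_in_V[OF assms]]
      card_subset_eq[OF finite_in_nbrs] card_subset_eq[OF finite_out_nbrs] by metis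
qed

lemma alt_list_head_succ_iff:
  assumes "alt_list vs"
  shows "is_head (cycle_edges vs) (cnth vs (j + 1)) \<longleftrightarrow> \<not> is_head (cycle_edges vs) (cnth vs j)"
proof -
  let ?C = "cycle_edges vs" and ?x = "cnth vs j" and ?y = "cnth vs (j + 1)"
  have "?y \<in> cycle_nbrs ?C ?x" "?x \<in> cycle_nbrs ?C ?y"
    using alt_list_nbrs[OF assms] by simp_all
  moreover have "(?x, ?y) \<in> Ori \<longleftrightarrow> (?y, ?x) \<notin> Ori"
    using orientation_total[OF alt_list_adj[OF assms]] orientation_asym by blast
  moreover have "in_nbrs ?x \<noteq> out_nbrs ?x" "in_nbrs ?y \<noteq> out_nbrs ?y"
    using in_nbrs_ne_out_nbrs alt_list_in_V[OF assms] by blast+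
  ultimately show ?thesis
    using alt_list_head_or_tail[OF assms, of j] alt_list_head_or_tail[OF assms, of "j + 1"]
    unfolding in_nbrs_def out_nbrs_def by auto
qed

lemma alt_list_head_iff_even:
  assumes "alt_list vs"
  shows "is_head (cycle_edges vs) (cnth vs (i + int k)) \<longleftrightarrow>
    (is_head (cycle_edges vs) (cnth vs i) \<longleftrightarrow> even k)"
proof (induction k)
  case (Suc k)
  have "i + int (Suc k) = i + int k + 1" by simp
  then show ?case unfolding \<open>i + int (Suc k) = _\<close>
    using Suc alt_list_head_succ_iff[OF assms, of "i + int k"] by simp
qed simp

lemma alt_list_even_length:
  assumes "alt_list vs"
  shows "even (length vs)"
proof -
  have "cnth vs (0 + int (length vs)) = cnth vs 0" by (simp add: cnth_def)
  then show ?thesis using alt_list_head_iff_even[OF assms, of 0 "length vs"] by auto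
qed

lemma alt_list_head_iff_even_diff:
  assumes "alt_list vs"
  shows "is_head (cycle_edges vs) (cnth vs j) \<longleftrightarrow>
    (is_head (cycle_edges vs) (cnth vs i) \<longleftrightarrow> even (j - i))"
proof -
  define k where "k = nat ((j - i) mod int (length vs))"
  have k: "int k = (j - i) mod int (length vs)"
    using alt_list_nonempty[OF assms] by (simp add: k_def)
  then have "cnth vs (i + int k) = cnth vs j" by (metis cnth_cong mod_add_right_eq add.commute diff_add_cancel)
  moreover have "even (int (length vs))" using alt_list_even_length[OF assms] by simp
  then have "((j - i) mod int (length vs)) mod 2 = (j - i) mod 2" by (simp add: mod_mod_cancel)
  then have "even k \<longleftrightarrow> even (j - i)" using k by (metis even_iff_mod_2_eq_zero even_of_nat)
  ultimately show ?thesis using alt_list_head_iff_even[OF assms, of i k] by simp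
qed

lemma alt_list_cverts: "alt_list vs \<Longrightarrow> cverts (cycle_edges vs) = range (cnth vs)"
  by (simp add: cverts_cycle_edges set_eq_range_cnth alt_list_nonempty)

lemma alt_cycle_cverts_subset:
  assumes "C \<in> ACs"
  shows "cverts C \<subseteq> V"
proof -
  obtain vs where "C = cycle_edges vs" "alt_list vs" using assms alt_cycles_iff by blast
  then show ?thesis using alt_list_in_V alt_list_cverts by (simp add: image_subset_iff)
qed

lemma alt_cycle_head_or_tail:
  assumes "C \<in> ACs" and "x \<in> cverts C"
  shows "is_head C x \<or> is_tail C x"
proof -
  obtain vs where "C = cycle_edges vs" "alt_list vs" using assms(1) alt_cycles_iff by blast
  moreover obtain j where "x = cnth vs j"
    using assms(2) \<open>C = _\<close> alt_list_cverts[OF \<open>alt_list vs\<close>] by blast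
  ultimately show ?thesis using alt_list_head_or_tail by blast
qed

lemma cycle_nbrs_in_cverts: "y \<in> cycle_nbrs C x \<Longrightarrow> x \<in> cverts C \<and> y \<in> cverts C"
  unfolding cycle_nbrs_def cverts_def by blast

lemma alt_cycle_nbrs_eqI:
  assumes "C \<in> ACs" and "D \<in> ACs" and "y \<in> cycle_nbrs C x" and "y \<in> cycle_nbrs D x"
  shows "cycle_nbrs C x = cycle_nbrs D x"
proof -
  have "x \<in> cverts C" "x \<in> cverts D"
    using cycle_nbrs_in_cverts[OF assms(3)] cycle_nbrs_in_cverts[OF assms(4)] by simp_all
  then have "is_head C x \<or> is_tail C x" "is_head D x \<or> is_tail D x"
    using alt_cycle_head_or_tail assms(1,2) by blast+
  moreover have "y \<notin> in_nbrs x \<inter> out_nbrs x" using in_out_nbrs_disjoint by blast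
  ultimately show ?thesis using assms(3,4) by auto
qed

text \<open>Walking along C, each next edge is forced to lie on D as well.\<close>

lemma alt_cycle_subset:
  assumes "C \<in> ACs" and "D \<in> ACs" and "x \<in> cverts C" and "cycle_nbrs C x = cycle_nbrs D x"
  shows "C \<subseteq> D"
proof -
  obtain vs where vs: "C = cycle_edges vs" "alt_list vs" using assms(1) alt_cycles_iff by blast
  let ?c = "cnth vs"
  obtain j0 where "x = ?c j0" using assms(3) vs alt_list_cverts by blast
  have walk: "{?c (j0 + int k), ?c (j0 + int k + 1)} \<in> D" for k
  proof (induction k)
    case 0
    have "?c (j0 + 1) \<in> cycle_nbrs D x"
      using alt_list_nbrs[OF vs(2)] vs(1) assms(4) \<open>x = _\<close> by auto
    then show ?case using \<open>x = _\<close> by (simp add: cycle_nbrs_def)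
  next
    case (Suc k)
    let ?i = "j0 + int k"
    have nbrs_C: "cycle_nbrs C (?c (?i + 1)) = {?c ?i, ?c (?i + 1 + 1)}"
      using alt_list_nbrs[OF vs(2), of "?i + 1"] vs(1) by simp
    have "?c ?i \<in> cycle_nbrs C (?c (?i + 1))" using nbrs_C by simp
    moreover have "?c ?i \<in> cycle_nbrs D (?c (?i + 1))"
      using Suc by (simp add: cycle_nbrs_def insert_commute)
    ultimately have "cycle_nbrs C (?c (?i + 1)) = cycle_nbrs D (?c (?i + 1))"
      by (rule alt_cycle_nbrs_eqI[OF assms(1,2)])
    then have "?c (?i + 1 + 1) \<in> cycle_nbrs D (?c (?i + 1))" using nbrs_C by blast
    moreover have "j0 + int (Suc k) = ?i + 1" by simp
    ultimately show ?case unfolding \<open>j0 + int (Suc k) = _\<close> cycle_nbrs_def by simp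
  qed
  show "C \<subseteq> D"
  proof
    fix e assume "e \<in> C"
    then obtain i where e: "e = {?c i, ?c (i + 1)}"
      using vs(1) cycle_edges_eq_range_cnth[OF alt_list_nonempty[OF vs(2)]] by blast
    define k where "k = nat ((i - j0) mod int (length vs))"
    have "(j0 + int k) mod int (length vs) = i mod int (length vs)"
      using alt_list_nonempty[OF vs(2)] by (simp add: k_def mod_add_right_eq)
    then have "?c (j0 + int k) = ?c i" "?c (j0 + int k + 1) = ?c (i + 1)"
      using cnth_cong mod_add_cong by blast+
    then show "e \<in> D" using walk[of k] e by simp
  qed
qed

lemma alt_cycles_eqI:
  assumes "C \<in> ACs" and "D \<in> ACs" and "x \<in> cverts C" and "x \<in> cverts D"
    and "cycle_nbrs C x = cycle_nbrs D x"
  shows "C = D"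
  using alt_cycle_subset[OF assms(1,2,3,5)] alt_cycle_subset[OF assms(2,1,4) assms(5)[symmetric]] by blast

lemma alt_list_map:
  assumes "g \<in> G" and "alt_list vs"
  shows "alt_list (map g vs)"
proof
  have "set vs \<subseteq> V" using assms(2) by (simp add: is_cycle_list_def)
  then have "inj_on g (set vs)" "\<And>x. x \<in> set vs \<Longrightarrow> g x \<in> V"
    "\<And>x y. x \<in> set vs \<Longrightarrow> y \<in> set vs \<Longrightarrow> E x y \<Longrightarrow> E (g x) (g y)"
    using G_inj_on[OF assms(1)] G_in_V[OF assms(1)] G_adj_iff[OF assms(1)] inj_on_subset
    by (blast, blast, blast)
  then show "is_cycle_list V E (map g vs)" using assms(2) is_cycle_list_map[of V E vs g V E] by blast
  show "alternating_list Ori (map g vs)"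
    using alternating_list_map[of Ori g Ori vs] orientation_image[OF _ assms(1)] assms(2) by blast
qed

lemma cyc_act_alt_cycle:
  assumes "g \<in> G" and "C \<in> ACs"
  shows "cyc_act g C \<in> ACs"
proof -
  obtain vs where "C = cycle_edges vs" "alt_list vs" using assms(2) alt_cycles_iff by blast
  then have "cyc_act g C = cycle_edges (map g vs)" "alt_list (map g vs)"
    using cyc_act_cycle_edges alt_list_map[OF assms(1)] by simp_all
  then show ?thesis using alt_cycles_iff by blast
qed

lemma alt_cycle_cyc_act_nbrs:
  "g \<in> G \<Longrightarrow> C \<in> ACs \<Longrightarrow> x \<in> V \<Longrightarrow> cycle_nbrs (cyc_act g C) (g x) = g ` cycle_nbrs C x"
  by (rule cycle_nbrs_cyc_act[OF G_inj_on alt_cycle_cverts_subset])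

lemma card_cverts_cyc_act: "g \<in> G \<Longrightarrow> C \<in> ACs \<Longrightarrow> card (cverts (cyc_act g C)) = card (cverts C)"
  unfolding cverts_cyc_act by (rule card_G_image[OF _ alt_cycle_cverts_subset])

lemma is_head_cyc_act:
  assumes "g \<in> G" and "C \<in> ACs" and "x \<in> cverts C" and "is_head C x"
  shows "is_head (cyc_act g C) (g x)"
proof -
  have "x \<in> V" using assms(2,3) alt_cycle_cverts_subset by blast
  then show ?thesis using assms(4) alt_cycle_cyc_act_nbrs[OF assms(1,2)] in_nbrs_image[OF assms(1)] by simp
qed

lemma is_tail_cyc_act:
  assumes "g \<in> G" and "C \<in> ACs" and "x \<in> cverts C" and "is_tail C x"
  shows "is_tail (cyc_act g C) (g x)"
proof -
  have "x \<in> V" using assms(2,3) alt_cycle_cverts_subset by blast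
  then show ?thesis using assms(4) alt_cycle_cyc_act_nbrs[OF assms(1,2)] out_nbrs_image[OF assms(1)] by simp
qed

lemma alt_cycle_ex_head_tail:
  assumes "C \<in> ACs"
  shows "\<exists>x\<in>cverts C. is_head C x" and "\<exists>x\<in>cverts C. is_tail C x"
proof -
  obtain vs where vs: "C = cycle_edges vs" "alt_list vs" using assms alt_cycles_iff by blast
  have in_C: "cnth vs 0 \<in> cverts C" "cnth vs 1 \<in> cverts C" using vs alt_list_cverts by blast+
  have succ: "is_head C (cnth vs 1) \<longleftrightarrow> \<not> is_head C (cnth vs 0)"
    using alt_list_head_succ_iff[OF vs(2), of 0] vs(1) by simp
  have head_or_tail: "is_head C (cnth vs j) \<or> is_tail C (cnth vs j)" for j
    using alt_list_head_or_tail[OF vs(2)] vs(1) by blast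
  show "\<exists>x\<in>cverts C. is_head C x"
    using in_C succ by (cases "is_head C (cnth vs 0)") auto
  show "\<exists>x\<in>cverts C. is_tail C x"
    using in_C succ head_or_tail[of 0] head_or_tail[of 1] by (cases "is_head C (cnth vs 0)") auto
qed

lemma ex_head_cycle:
  assumes "x \<in> V"
  shows "\<exists>C\<in>ACs. x \<in> cverts C \<and> is_head C x"
proof -
  obtain C where "C \<in> ACs" using ex_alt_list alt_cycles_iff by blast
  then obtain z where "z \<in> cverts C" "is_head C z" using alt_cycle_ex_head_tail(1) by blast
  moreover obtain g where "g \<in> G" "g z = x"
    using G_vertex_transitive assms \<open>C \<in> ACs\<close> \<open>z \<in> cverts C\<close> alt_cycle_cverts_subset by blast
  moreover have "cyc_act g C \<in> ACs" "g z \<in> cverts (cyc_act g C)"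
    using cyc_act_alt_cycle \<open>g \<in> G\<close> \<open>C \<in> ACs\<close> \<open>z \<in> cverts C\<close> by (simp_all add: cverts_cyc_act)
  ultimately show ?thesis using is_head_cyc_act[OF \<open>g \<in> G\<close> \<open>C \<in> ACs\<close>] by blast
qed

lemma ex_tail_cycle:
  assumes "x \<in> V"
  shows "\<exists>C\<in>ACs. x \<in> cverts C \<and> is_tail C x"
proof -
  obtain C where "C \<in> ACs" using ex_alt_list alt_cycles_iff by blast
  then obtain z where "z \<in> cverts C" "is_tail C z" using alt_cycle_ex_head_tail(2) by blast
  moreover obtain g where "g \<in> G" "g z = x"
    using G_vertex_transitive assms \<open>C \<in> ACs\<close> \<open>z \<in> cverts C\<close> alt_cycle_cverts_subset by blast
  moreover have "cyc_act g C \<in> ACs" "g z \<in> cverts (cyc_act g C)"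
    using cyc_act_alt_cycle \<open>g \<in> G\<close> \<open>C \<in> ACs\<close> \<open>z \<in> cverts C\<close> by (simp_all add: cverts_cyc_act)
  ultimately show ?thesis using is_tail_cyc_act[OF \<open>g \<in> G\<close> \<open>C \<in> ACs\<close>] by blast
qed

definition head_cycle :: "'a \<Rightarrow> 'a set set" where
  "head_cycle x = (THE C. C \<in> ACs \<and> x \<in> cverts C \<and> is_head C x)"

definition tail_cycle :: "'a \<Rightarrow> 'a set set" where
  "tail_cycle x = (THE C. C \<in> ACs \<and> x \<in> cverts C \<and> is_tail C x)"

lemma head_cycle:
  assumes "x \<in> V"
  shows "head_cycle x \<in> ACs \<and> x \<in> cverts (head_cycle x) \<and> is_head (head_cycle x) x"
proof -
  have "\<exists>!C. C \<in> ACs \<and> x \<in> cverts C \<and> is_head C x"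
  proof (rule ex_ex1I)
    show "\<exists>C. C \<in> ACs \<and> x \<in> cverts C \<and> is_head C x" using ex_head_cycle[OF assms] by blast
  next
    fix C D assume "C \<in> ACs \<and> x \<in> cverts C \<and> is_head C x" "D \<in> ACs \<and> x \<in> cverts D \<and> is_head D x"
    then show "C = D" using alt_cycles_eqI[of C D x] by simp
  qed
  then show ?thesis unfolding head_cycle_def by (rule theI')
qed

lemma tail_cycle:
  assumes "x \<in> V"
  shows "tail_cycle x \<in> ACs \<and> x \<in> cverts (tail_cycle x) \<and> is_tail (tail_cycle x) x"
proof -
  have "\<exists>!C. C \<in> ACs \<and> x \<in> cverts C \<and> is_tail C x"
  proof (rule ex_ex1I)
    show "\<exists>C. C \<in> ACs \<and> x \<in> cverts C \<and> is_tail C x" using ex_tail_cycle[OF assms] by blast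
  next
    fix C D assume "C \<in> ACs \<and> x \<in> cverts C \<and> is_tail C x" "D \<in> ACs \<and> x \<in> cverts D \<and> is_tail D x"
    then show "C = D" using alt_cycles_eqI[of C D x] by simp
  qed
  then show ?thesis unfolding tail_cycle_def by (rule theI')
qed

lemma head_cycle_eqI:
  assumes "C \<in> ACs" and "x \<in> cverts C" and "is_head C x"
  shows "C = head_cycle x"
proof -
  have "x \<in> V" using assms(1,2) alt_cycle_cverts_subset by blast
  then show ?thesis using assms head_cycle alt_cycles_eqI[of C "head_cycle x" x] by simp
qed

lemma tail_cycle_eqI:
  assumes "C \<in> ACs" and "x \<in> cverts C" and "is_tail C x"
  shows "C = tail_cycle x"
proof -
  have "x \<in> V" using assms(1,2) alt_cycle_cverts_subset by blast
  then show ?thesis using assms tail_cycle alt_cycles_eqI[of C "tail_cycle x" x] by simp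
qed

lemma alt_cycle_through_cases: "C \<in> ACs \<Longrightarrow> x \<in> cverts C \<Longrightarrow> C = head_cycle x \<or> C = tail_cycle x"
  using alt_cycle_head_or_tail head_cycle_eqI tail_cycle_eqI by blast

lemma head_cycle_ne_tail_cycle: "x \<in> V \<Longrightarrow> head_cycle x \<noteq> tail_cycle x"
  using head_cycle[of x] tail_cycle[of x] in_nbrs_ne_out_nbrs[of x] by auto

lemma cyc_act_head_cycle:
  assumes "g \<in> G" and "x \<in> V"
  shows "cyc_act g (head_cycle x) = head_cycle (g x)"
proof (rule head_cycle_eqI)
  show "cyc_act g (head_cycle x) \<in> ACs" using cyc_act_alt_cycle assms head_cycle by blast
  show "g x \<in> cverts (cyc_act g (head_cycle x))" using head_cycle[OF assms(2)] by (simp add: cverts_cyc_act)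
  show "is_head (cyc_act g (head_cycle x)) (g x)" using is_head_cyc_act assms head_cycle by blast
qed

lemma cyc_act_tail_cycle:
  assumes "g \<in> G" and "x \<in> V"
  shows "cyc_act g (tail_cycle x) = tail_cycle (g x)"
proof (rule tail_cycle_eqI)
  show "cyc_act g (tail_cycle x) \<in> ACs" using cyc_act_alt_cycle assms tail_cycle by blast
  show "g x \<in> cverts (cyc_act g (tail_cycle x))" using tail_cycle[OF assms(2)] by (simp add: cverts_cyc_act)
  show "is_tail (cyc_act g (tail_cycle x)) (g x)" using is_tail_cyc_act assms tail_cycle by blast
qed

lemma cyc_act_fixes_alt_cycle:
  assumes "g \<in> G" and "g x = x" and "C \<in> ACs" and "x \<in> cverts C"
  shows "cyc_act g C = C"
proof -
  have "x \<in> V" using assms(3,4) alt_cycle_cverts_subset by blast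
  then show ?thesis
    using alt_cycle_through_cases[OF assms(3,4)] cyc_act_head_cycle cyc_act_tail_cycle assms(1,2) by auto
qed

section \<open>The graph of alternating cycles\<close>

lemma alt_adj_head_tail_cycle: "x \<in> V \<Longrightarrow> alt_adj V E G (head_cycle x) (tail_cycle x)"
  unfolding alt_adj_def using head_cycle tail_cycle head_cycle_ne_tail_cycle by blast

lemma alt_adj_sym: "alt_adj V E G C D \<Longrightarrow> alt_adj V E G D C"
  unfolding alt_adj_def by blast

lemma alt_adj_through:
  assumes "alt_adj V E G C D" and "x \<in> cverts C" and "x \<in> cverts D"
  shows "D = (if C = head_cycle x then tail_cycle x else head_cycle x)"
proof -
  have "C \<in> ACs" "D \<in> ACs" "C \<noteq> D" using assms(1) unfolding alt_adj_def by blast+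
  then have "C = head_cycle x \<or> C = tail_cycle x" "D = head_cycle x \<or> D = tail_cycle x"
    using alt_cycle_through_cases assms(2,3) by blast+
  then show ?thesis using \<open>C \<noteq> D\<close> by (cases "C = head_cycle x") simp_all
qed

lemma alt_adj_ex_through:
  assumes "alt_adj V E G C D"
  obtains x where "x \<in> V" "x \<in> cverts C" "x \<in> cverts D"
  using assms alt_cycle_cverts_subset unfolding alt_adj_def by blast

lemma alt_adj_eq_head_tail_cycle:
  assumes "alt_adj V E G C D"
  shows "\<exists>x\<in>V. {C, D} = {head_cycle x, tail_cycle x}"
proof -
  obtain x where "x \<in> V" "x \<in> cverts C" "x \<in> cverts D" using alt_adj_ex_through[OF assms] .
  moreover have "C = head_cycle x \<or> C = tail_cycle x"
    using alt_cycle_through_cases assms \<open>x \<in> cverts C\<close> unfolding alt_adj_def by blast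
  ultimately show ?thesis using alt_adj_through[OF assms \<open>x \<in> cverts C\<close> \<open>x \<in> cverts D\<close>]
    by (cases "C = head_cycle x") (auto simp: insert_commute)
qed

lemma alt_adj_eq_image:
  assumes "x \<in> V" and "alt_adj V E G C D"
  shows "\<exists>g\<in>G. cyc_act g ` {head_cycle x, tail_cycle x} = {C, D}"
proof -
  obtain y where "y \<in> V" "{C, D} = {head_cycle y, tail_cycle y}"
    using alt_adj_eq_head_tail_cycle[OF assms(2)] by blast
  moreover obtain g where "g \<in> G" "g x = y" using G_vertex_transitive assms(1) \<open>y \<in> V\<close> by blast
  ultimately show ?thesis using cyc_act_head_cycle cyc_act_tail_cycle assms(1) by (intro bexI[of _ g]) auto
qed

lemma vertex_transitive_cyc_act: "vertex_transitive (cyc_act ` G) ACs"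
  unfolding vertex_transitive_def
proof (intro ballI)
  fix C D assume "C \<in> ACs" "D \<in> ACs"
  obtain x where "x \<in> cverts C" "is_head C x" using alt_cycle_ex_head_tail(1)[OF \<open>C \<in> ACs\<close>] by blast
  obtain y where "y \<in> cverts D" "is_head D y" using alt_cycle_ex_head_tail(1)[OF \<open>D \<in> ACs\<close>] by blast
  have "x \<in> V" "y \<in> V"
    using \<open>x \<in> cverts C\<close> \<open>y \<in> cverts D\<close> \<open>C \<in> ACs\<close> \<open>D \<in> ACs\<close> alt_cycle_cverts_subset by blast+
  obtain g where "g \<in> G" "g x = y" using G_vertex_transitive[OF \<open>x \<in> V\<close> \<open>y \<in> V\<close>] by blast
  have "C = head_cycle x" "D = head_cycle y"
    using head_cycle_eqI \<open>C \<in> ACs\<close> \<open>D \<in> ACs\<close> \<open>x \<in> cverts C\<close> \<open>y \<in> cverts D\<close>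
      \<open>is_head C x\<close> \<open>is_head D y\<close> by blast+
  then have "cyc_act g C = D" using cyc_act_head_cycle[OF \<open>g \<in> G\<close> \<open>x \<in> V\<close>] \<open>g x = y\<close> by simp
  then show "\<exists>h\<in>cyc_act ` G. h C = D" using \<open>g \<in> G\<close> by blast
qed

lemma edge_transitive_cyc_act: "edge_transitive (cyc_act ` G) ACs (alt_adj V E G)"
  unfolding edge_transitive_def
proof (intro ballI)
  fix e f assume "e \<in> edges ACs (alt_adj V E G)" "f \<in> edges ACs (alt_adj V E G)"
  then obtain C D C' D' where "e = {C, D}" "alt_adj V E G C D" "f = {C', D'}" "alt_adj V E G C' D'"
    unfolding edges_def by blast
  moreover obtain x where "x \<in> V" "{C, D} = {head_cycle x, tail_cycle x}"
    using alt_adj_eq_head_tail_cycle \<open>alt_adj V E G C D\<close> by blast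
  moreover obtain g where "g \<in> G" "cyc_act g ` {head_cycle x, tail_cycle x} = {C', D'}"
    using alt_adj_eq_image \<open>x \<in> V\<close> \<open>alt_adj V E G C' D'\<close> by blast
  ultimately show "\<exists>h\<in>cyc_act ` G. h ` e = f" by auto
qed

lemma card_inter_alt_adj:
  assumes "x \<in> V" and "alt_adj V E G C D"
  shows "card (cverts C \<inter> cverts D) = card (cverts (head_cycle x) \<inter> cverts (tail_cycle x))"
proof -
  obtain g where "g \<in> G" "cyc_act g ` {head_cycle x, tail_cycle x} = {C, D}"
    using alt_adj_eq_image[OF assms] by blast
  then have "cverts C \<inter> cverts D = cverts (cyc_act g (head_cycle x)) \<inter> cverts (cyc_act g (tail_cycle x))"
    by (auto simp: doubleton_eq_iff)
  also have "\<dots> = g ` (cverts (head_cycle x) \<inter> cverts (tail_cycle x))"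
    unfolding cverts_cyc_act
    using inj_on_image_Int[OF G_inj_on[OF \<open>g \<in> G\<close>]] alt_cycle_cverts_subset
      head_cycle[OF assms(1)] tail_cycle[OF assms(1)] by simp
  finally show ?thesis
    using card_G_image[OF \<open>g \<in> G\<close>] alt_cycle_cverts_subset head_cycle[OF assms(1)] by (simp add: le_infI1)
qed

lemma att_eq:
  assumes "x \<in> V"
  shows "att V E G = card (cverts (head_cycle x) \<inter> cverts (tail_cycle x))"
proof -
  define P where "P = (\<lambda>(C, D). C \<in> ACs \<and> D \<in> ACs \<and> C \<noteq> D \<and> cverts C \<inter> cverts D \<noteq> {})"
  have "P (head_cycle x, tail_cycle x)"
    using alt_adj_head_tail_cycle[OF assms] unfolding alt_adj_def P_def by simp
  then have "P (Eps P)" by (rule someI)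
  moreover obtain C D where CD: "Eps P = (C, D)" by fastforce
  ultimately have "alt_adj V E G C D" unfolding alt_adj_def P_def by simp
  moreover have "att V E G = card (cverts C \<inter> cverts D)"
    unfolding att_def P_def[symmetric] Let_def CD by simp
  ultimately show ?thesis using card_inter_alt_adj[OF assms] by simp
qed

lemma card_inter_eq_att:
  assumes "alt_adj V E G C D"
  shows "card (cverts C \<inter> cverts D) = att V E G"
proof -
  obtain x where "x \<in> V" using alt_adj_ex_through[OF assms] by blast
  then show ?thesis using card_inter_alt_adj[OF \<open>x \<in> V\<close> assms] att_eq[OF \<open>x \<in> V\<close>] by simp
qed

lemma finite_cverts_alt_cycle: "C \<in> ACs \<Longrightarrow> finite (cverts C)"
  using alt_cycle_cverts_subset finite_V finite_subset by blast

lemma att_pos: "0 < att V E G"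
proof -
  obtain x where "x \<in> V" using ex_alt_list alt_list_in_V by blast
  then have "x \<in> cverts (head_cycle x) \<inter> cverts (tail_cycle x)"
    using head_cycle tail_cycle by blast
  moreover have "finite (cverts (head_cycle x) \<inter> cverts (tail_cycle x))"
    using head_cycle[OF \<open>x \<in> V\<close>] finite_cverts_alt_cycle by blast
  ultimately show ?thesis unfolding att_eq[OF \<open>x \<in> V\<close>] using card_gt_0_iff by blast
qed

lemma card_alt_cycle:
  assumes "C \<in> ACs"
  shows "card C = card (cverts C)" and "even (card C)"
proof -
  obtain vs where vs: "C = cycle_edges vs" "alt_list vs" using assms alt_cycles_iff by blast
  have "card C = length vs"
    using card_cycle_edges[OF alt_list_distinct alt_list_length] vs by simp
  moreover have "card (cverts C) = length vs"
    using cverts_cycle_edges[OF alt_list_nonempty] distinct_card[OF alt_list_distinct] vs by simp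
  ultimately show "card C = card (cverts C)" "even (card C)" using alt_list_even_length[OF vs(2)] by simp_all
qed

lemma card_cverts_alt_cycles_eq:
  assumes "C \<in> ACs" and "D \<in> ACs"
  shows "card (cverts C) = card (cverts D)"
proof -
  obtain h where "h \<in> cyc_act ` G" "h C = D"
    using bspec[OF bspec[OF vertex_transitive_cyc_act[unfolded vertex_transitive_def] assms(1)] assms(2)]
    by blast
  then obtain g where "g \<in> G" "cyc_act g C = D" by blast
  then show ?thesis using card_cverts_cyc_act[OF \<open>g \<in> G\<close> assms(1)] by simp
qed

lemma two_rad_eq:
  assumes "C \<in> ACs"
  shows "2 * rad V E G = card (cverts C)"
proof -
  have "(SOME C. C \<in> ACs) \<in> ACs" using assms by (rule someI)
  then have "2 * rad V E G = card (cverts (SOME C. C \<in> ACs))"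
    unfolding rad_def using card_alt_cycle by simp
  then show ?thesis using card_cverts_alt_cycles_eq[OF \<open>(SOME C. C \<in> ACs) \<in> ACs\<close> assms] by simp
qed

lemma alt_adj_unique:
  assumes "alt_adj V E G C D" and "alt_adj V E G C D'"
    and "x \<in> cverts C" and "x \<in> cverts D" and "x \<in> cverts D'"
  shows "D = D'"
  unfolding alt_adj_through[OF assms(1,3,4)] alt_adj_through[OF assms(2,3,5)] ..

lemma alt_adj_ex:
  assumes "C \<in> ACs" and "x \<in> cverts C"
  shows "\<exists>D. alt_adj V E G C D \<and> x \<in> cverts D"
proof -
  have "x \<in> V" using assms alt_cycle_cverts_subset by blast
  have "alt_adj V E G (head_cycle x) (tail_cycle x)" "alt_adj V E G (tail_cycle x) (head_cycle x)"
    using alt_adj_head_tail_cycle[OF \<open>x \<in> V\<close>] alt_adj_sym by blast+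
  moreover have "x \<in> cverts (head_cycle x)" "x \<in> cverts (tail_cycle x)"
    using head_cycle[OF \<open>x \<in> V\<close>] tail_cycle[OF \<open>x \<in> V\<close>] by blast+
  ultimately show ?thesis using alt_cycle_through_cases[OF assms] by (elim disjE) (rule exI, simp)+
qed

text \<open>The sets in which the neighbours of C meet C partition the vertices of C into blocks of size att.\<close>

lemma att_mult_valence:
  assumes "C \<in> ACs"
  shows "att V E G * card {D. alt_adj V E G C D} = card (cverts C)"
proof -
  let ?N = "{D. alt_adj V E G C D}" and ?meet = "\<lambda>D. cverts C \<inter> cverts D"
  have "?N \<subseteq> ACs" unfolding alt_adj_def by blast
  then have "finite ?N" by (rule finite_subset[OF _ finite_ACs])
  have same_nbr: "D = D'" if "D \<in> ?N" "D' \<in> ?N" "x \<in> ?meet D" "x \<in> ?meet D'" for D D' x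
    using that alt_adj_unique[of C D D' x] by simp
  have inj: "inj_on ?meet ?N"
  proof (rule inj_onI)
    fix D D' assume "D \<in> ?N" "D' \<in> ?N" "?meet D = ?meet D'"
    moreover obtain x where "x \<in> ?meet D" using \<open>D \<in> ?N\<close> unfolding alt_adj_def by auto
    ultimately show "D = D'" using same_nbr[of D D' x] by blast
  qed
  have cover: "\<Union> (?meet ` ?N) = cverts C"
  proof
    show "cverts C \<subseteq> \<Union> (?meet ` ?N)"
    proof
      fix x assume "x \<in> cverts C"
      then obtain D where "alt_adj V E G C D" "x \<in> cverts D" using alt_adj_ex[OF assms] by blast
      then show "x \<in> \<Union> (?meet ` ?N)" using \<open>x \<in> cverts C\<close> by blast
    qed
  qed blast
  have card_meet: "card M = att V E G" if "M \<in> ?meet ` ?N" for M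
    using that card_inter_eq_att by blast
  have disjoint: "M \<inter> M' = {}" if M: "M \<in> ?meet ` ?N" "M' \<in> ?meet ` ?N" "M \<noteq> M'" for M M'
  proof (rule ccontr)
    assume "M \<inter> M' \<noteq> {}"
    obtain D D' where "D \<in> ?N" "D' \<in> ?N" "M = ?meet D" "M' = ?meet D'" using M(1,2) by blast
    obtain x where "x \<in> M" "x \<in> M'" using \<open>M \<inter> M' \<noteq> {}\<close> by blast
    have "D = D'" using same_nbr[of D D' x] \<open>D \<in> ?N\<close> \<open>D' \<in> ?N\<close> \<open>x \<in> M\<close> \<open>x \<in> M'\<close>
      \<open>M = _\<close> \<open>M' = _\<close> by simp
    then show False using M(3) \<open>M = _\<close> \<open>M' = _\<close> by simp
  qed
  have "att V E G * card (?meet ` ?N) = card (\<Union> (?meet ` ?N))"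
    by (rule card_partition[OF finite_imageI[OF \<open>finite ?N\<close>] _ card_meet disjoint])
      (simp only: cover finite_cverts_alt_cycle[OF assms])
  then show ?thesis using cover card_image[OF inj] by simp
qed

lemma valence_eq:
  assumes "C \<in> ACs"
  shows "real (card {D. alt_adj V E G C D}) = 2 * real (rad V E G) / real (att V E G)"
proof -
  have "real (att V E G) * real (card {D. alt_adj V E G C D}) = 2 * real (rad V E G)"
    using att_mult_valence[OF assms] two_rad_eq[OF assms] by (metis of_nat_mult of_nat_numeral)
  then show ?thesis using att_pos by (simp add: field_simps)
qed

section \<open>Arc-transitivity\<close>

lemma alt_adj_eq_head_tail_if_swap:
  assumes "x \<in> V" and "w \<in> V" and swap: "head_cycle w = tail_cycle x" "tail_cycle w = head_cycle x"
    and "alt_adj V E G C D"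
  shows "\<exists>y\<in>V. C = head_cycle y \<and> D = tail_cycle y"
proof -
  obtain y where "y \<in> V" "y \<in> cverts C" "y \<in> cverts D" using alt_adj_ex_through[OF assms(5)] .
  show ?thesis
  proof (cases "C = head_cycle y")
    case True
    then have "D = tail_cycle y" using alt_adj_through[OF assms(5) \<open>y \<in> cverts C\<close> \<open>y \<in> cverts D\<close>] by simp
    then show ?thesis using True \<open>y \<in> V\<close> by blast
  next
    case False
    have "C \<in> ACs" using assms(5) unfolding alt_adj_def by blast
    then have "C = tail_cycle y" using alt_cycle_through_cases \<open>y \<in> cverts C\<close> False by blast
    have "D = head_cycle y" using alt_adj_through[OF assms(5) \<open>y \<in> cverts C\<close> \<open>y \<in> cverts D\<close>] False by simp
    obtain g where "g \<in> G" "g x = y" using G_vertex_transitive assms(1) \<open>y \<in> V\<close> by blast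
    have "head_cycle (g w) = cyc_act g (head_cycle w)" using cyc_act_head_cycle[OF \<open>g \<in> G\<close> assms(2)] ..
    also have "\<dots> = C" using cyc_act_tail_cycle[OF \<open>g \<in> G\<close> assms(1)] swap \<open>g x = y\<close> \<open>C = _\<close> by simp
    finally have "C = head_cycle (g w)" ..
    have "tail_cycle (g w) = cyc_act g (tail_cycle w)" using cyc_act_tail_cycle[OF \<open>g \<in> G\<close> assms(2)] ..
    also have "\<dots> = D" using cyc_act_head_cycle[OF \<open>g \<in> G\<close> assms(1)] swap \<open>g x = y\<close> \<open>D = _\<close> by simp
    finally have "D = tail_cycle (g w)" ..
    then show ?thesis using \<open>C = head_cycle (g w)\<close> G_in_V[OF \<open>g \<in> G\<close> assms(2)] by blast
  qed
qed

lemma arc_transitive_cyc_act_if_swap: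
  assumes "x \<in> V" and "w \<in> V" and "head_cycle w = tail_cycle x" and "tail_cycle w = head_cycle x"
  shows "arc_transitive (cyc_act ` G) ACs (alt_adj V E G)"
proof -
  have "\<exists>h\<in>cyc_act ` G. h C = C' \<and> h D = D'"
    if adj: "alt_adj V E G C D" "alt_adj V E G C' D'" for C D C' D'
  proof -
    obtain y where "y \<in> V" "C = head_cycle y" "D = tail_cycle y"
      using alt_adj_eq_head_tail_if_swap[OF assms adj(1)] by blast
    obtain y' where "y' \<in> V" "C' = head_cycle y'" "D' = tail_cycle y'"
      using alt_adj_eq_head_tail_if_swap[OF assms adj(2)] by blast
    obtain g where "g \<in> G" "g y = y'" using G_vertex_transitive \<open>y \<in> V\<close> \<open>y' \<in> V\<close> by blast
    then have "cyc_act g C = C' \<and> cyc_act g D = D'"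
      using cyc_act_head_cycle cyc_act_tail_cycle \<open>y \<in> V\<close> \<open>C = _\<close> \<open>D = _\<close> \<open>C' = _\<close> \<open>D' = _\<close>
      by simp
    then show ?thesis using \<open>g \<in> G\<close> by (intro bexI[of _ "cyc_act g"]) simp_all
  qed
  then show ?thesis unfolding arc_transitive_def arcs_def by auto
qed

lemma swap_if_arc_transitive_cyc_act:
  assumes "x \<in> V" and "arc_transitive (cyc_act ` G) ACs (alt_adj V E G)"
  shows "\<exists>w\<in>V. head_cycle w = tail_cycle x \<and> tail_cycle w = head_cycle x"
proof -
  have arc: "(head_cycle x, tail_cycle x) \<in> arcs ACs (alt_adj V E G)"
    and reverse_arc: "(tail_cycle x, head_cycle x) \<in> arcs ACs (alt_adj V E G)"
    using alt_adj_head_tail_cycle[OF assms(1)] alt_adj_sym head_cycle[OF assms(1)] tail_cycle[OF assms(1)]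
    unfolding arcs_def by auto
  have "\<forall>(p, q)\<in>arcs ACs (alt_adj V E G).
      \<exists>h\<in>cyc_act ` G. h (head_cycle x) = p \<and> h (tail_cycle x) = q"
    using bspec[OF assms(2)[unfolded arc_transitive_def] arc] by simp
  from bspec[OF this reverse_arc]
  obtain h where "h \<in> cyc_act ` G" "h (head_cycle x) = tail_cycle x" "h (tail_cycle x) = head_cycle x"
    by auto
  then obtain g where "g \<in> G" "cyc_act g (head_cycle x) = tail_cycle x" "cyc_act g (tail_cycle x) = head_cycle x"
    by blast
  then show ?thesis
    using cyc_act_head_cycle[OF \<open>g \<in> G\<close> assms(1)] cyc_act_tail_cycle[OF \<open>g \<in> G\<close> assms(1)]
      G_in_V[OF \<open>g \<in> G\<close> assms(1)] by auto
qed

section \<open>Common vertices of adjacent alternating cycles\<close>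

lemma alt_list_ex_reflection:
  assumes "alt_list vs"
  shows "\<exists>g\<in>G. g (cnth vs i) = cnth vs i \<and> g (cnth vs (i + 1)) = cnth vs (i - 1)"
proof -
  let ?y = "cnth vs i" and ?a = "cnth vs (i - 1)" and ?b = "cnth vs (i + 1)"
  have "{?a, ?b} \<subseteq> in_nbrs ?y \<or> {?a, ?b} \<subseteq> out_nbrs ?y"
    using alt_list_alternates[OF assms, of i] alt_list_nbrs[OF assms, of i] by simp
  then have "(?b, ?y) \<in> Ori \<and> (?a, ?y) \<in> Ori \<or> (?y, ?b) \<in> Ori \<and> (?y, ?a) \<in> Ori"
    unfolding in_nbrs_def out_nbrs_def by blast
  then show ?thesis
  proof
    assume "(?b, ?y) \<in> Ori \<and> (?a, ?y) \<in> Ori"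
    then obtain g where "g \<in> G" "g ?b = ?a" "g ?y = ?y" using orientation_transitive by blast
    then show ?thesis by blast
  next
    assume "(?y, ?b) \<in> Ori \<and> (?y, ?a) \<in> Ori"
    then obtain g where "g \<in> G" "g ?y = ?y" "g ?b = ?a" using orientation_transitive by blast
    then show ?thesis by blast
  qed
qed

lemma alt_list_reflection:
  assumes "alt_list vs" and "g \<in> G" and fixes_cycle: "cyc_act g (cycle_edges vs) = cycle_edges vs"
    and "g (cnth vs i) = cnth vs i" and "g (cnth vs (i + 1)) = cnth vs (i - 1)"
  shows "g (cnth vs j) = cnth vs (2 * i - j)"
proof -
  let ?c = "cnth vs" and ?C = "cycle_edges vs"
  have "?C \<in> ACs" using assms(1) alt_cycles_iff by blast
  have nbrs_image: "g ` {?c (p - 1), ?c (p + 1)} = {?c (q - 1), ?c (q + 1)}" if "g (?c p) = ?c q" for p q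
  proof -
    have "cycle_nbrs (cyc_act g ?C) (g (?c p)) = g ` cycle_nbrs ?C (?c p)"
      using cycle_nbrs_cyc_act[OF G_inj_on[OF assms(2)] alt_cycle_cverts_subset[OF \<open>?C \<in> ACs\<close>]
        alt_list_in_V[OF assms(1)]] .
    then show ?thesis unfolding fixes_cycle that alt_list_nbrs[OF assms(1)] by simp
  qed
  have reflect: "g (?c (i + int k)) = ?c (i - int k) \<and> g (?c (i + int k + 1)) = ?c (i - int k - 1)" for k
  proof (induction k)
    case (Suc k)
    let ?p = "i + int k + 1"
    have "g ` {?c (?p - 1), ?c (?p + 1)} = {?c (i - int k - 1 - 1), ?c (i - int k - 1 + 1)}"
      using nbrs_image[of ?p "i - int k - 1"] Suc by simp
    moreover have "g (?c (?p - 1)) = ?c (i - int k)" using Suc by simp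
    moreover have "g (?c (?p - 1)) \<noteq> g (?c (?p + 1))"
      using inj_onD[OF G_inj_on[OF assms(2)] _ alt_list_in_V[OF assms(1)] alt_list_in_V[OF assms(1)]]
        cnth_pred_ne_succ[OF alt_list_distinct[OF assms(1)] alt_list_length[OF assms(1)]] by blast
    ultimately have "g (?c (?p + 1)) = ?c (i - int k - 1 - 1)" by (auto simp: doubleton_eq_iff)
    moreover have "i + int (Suc k) = ?p" "i - int (Suc k) = i - int k - 1" by simp_all
    ultimately show ?case unfolding \<open>i + int (Suc k) = ?p\<close> \<open>i - int (Suc k) = _\<close> using Suc by simp
  qed (use assms(4,5) in simp)
  define k where "k = nat ((j - i) mod int (length vs))"
  have k: "int k = (j - i) mod int (length vs)"
    using alt_list_nonempty[OF assms(1)] by (simp add: k_def)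
  then have "(i + int k) mod int (length vs) = j mod int (length vs)"
    by (simp add: mod_add_right_eq)
  then have "?c (i + int k) = ?c j" by (rule cnth_cong)
  moreover have "(i - int k) mod int (length vs) = (i - (j - i)) mod int (length vs)"
    using k by (simp add: mod_diff_right_eq)
  then have "?c (i - int k) = ?c (i - (j - i))" by (rule cnth_cong)
  moreover have "i - (j - i) = 2 * i - j" by simp
  ultimately show ?thesis using reflect[of k] by simp
qed

end

locale alt_cycle_at_head = tetravalent_half_arc_transitive +
  fixes ws :: "'a list" and s :: int
  assumes alt_list_ws: "alt_list ws"
    and head_at_s: "is_head (cycle_edges ws) (cnth ws s)"
begin

abbreviation "x0 \<equiv> cnth ws s"

definition common_idx :: "int set" where
  "common_idx = {j. cnth ws j \<in> cverts (tail_cycle x0)}"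

lemma x0_in_V: "x0 \<in> V"
  using alt_list_in_V[OF alt_list_ws] .

lemma cycle_edges_ws: "cycle_edges ws = head_cycle x0"
proof (rule head_cycle_eqI)
  show "cycle_edges ws \<in> ACs" using alt_list_ws alt_cycles_iff by blast
  show "x0 \<in> cverts (cycle_edges ws)" using alt_list_cverts[OF alt_list_ws] by simp
qed (rule head_at_s)

lemma cverts_head_cycle_x0: "cverts (head_cycle x0) = range (cnth ws)"
  using alt_list_cverts[OF alt_list_ws] cycle_edges_ws by simp

lemma common_idx_reflect:
  assumes "i \<in> common_idx" and "j \<in> common_idx"
  shows "2 * i - j \<in> common_idx"
proof -
  obtain g where "g \<in> G" "g (cnth ws i) = cnth ws i" "g (cnth ws (i + 1)) = cnth ws (i - 1)"
    using alt_list_ex_reflection[OF alt_list_ws] by blast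
  have "cnth ws i \<in> cverts (head_cycle x0)" "cnth ws i \<in> cverts (tail_cycle x0)"
    using cverts_head_cycle_x0 assms(1) unfolding common_idx_def by simp_all
  then have "cyc_act g (head_cycle x0) = head_cycle x0" "cyc_act g (tail_cycle x0) = tail_cycle x0"
    using cyc_act_fixes_alt_cycle[OF \<open>g \<in> G\<close> \<open>g (cnth ws i) = _\<close>] head_cycle[OF x0_in_V]
      tail_cycle[OF x0_in_V] by blast+
  then have "g (cnth ws j) = cnth ws (2 * i - j)"
    using alt_list_reflection[OF alt_list_ws \<open>g \<in> G\<close> _ \<open>g (cnth ws i) = _\<close> \<open>g (cnth ws (i + 1)) = _\<close>]
      cycle_edges_ws by simp
  moreover have "g (cnth ws j) \<in> cverts (cyc_act g (tail_cycle x0))"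
    using assms(2) unfolding common_idx_def cverts_cyc_act by blast
  ultimately show ?thesis
    unfolding common_idx_def using \<open>cyc_act g (tail_cycle x0) = tail_cycle x0\<close> by simp
qed

definition step :: int where
  "step = (SOME d. 0 < d \<and> d dvd int (length ws) \<and> common_idx = {j. d dvd j - s})"

lemma step: "0 < step" "step dvd int (length ws)" "common_idx = {j. step dvd j - s}"
proof -
  have "s \<in> common_idx" "s + int (length ws) \<in> common_idx"
    using tail_cycle[OF x0_in_V] unfolding common_idx_def by simp_all
  moreover have "0 < int (length ws)" using alt_list_nonempty[OF alt_list_ws] by simp
  ultimately have "\<exists>d>0. d dvd int (length ws) \<and> common_idx = {j. d dvd j - s}"
    using reflection_closed_int_set_eq_residue_class[OF _ _ _ common_idx_reflect] by blast
  then have "0 < step \<and> step dvd int (length ws) \<and> common_idx = {j. step dvd j - s}"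
    unfolding step_def by (rule someI_ex)
  then show "0 < step" "step dvd int (length ws)" "common_idx = {j. step dvd j - s}" by simp_all
qed

lemma two_rad_eq_length: "2 * rad V E G = length ws"
proof -
  have "cycle_edges ws \<in> ACs" using alt_list_ws alt_cycles_iff by blast
  then have "2 * rad V E G = card (cverts (cycle_edges ws))" by (rule two_rad_eq)
  also have "\<dots> = card (set ws)" using cverts_cycle_edges[OF alt_list_nonempty[OF alt_list_ws]] by simp
  also have "\<dots> = length ws" by (rule distinct_card[OF alt_list_distinct[OF alt_list_ws]])
  finally show ?thesis .
qed

lemma cverts_head_inter_tail_cycle_x0:
  "cverts (head_cycle x0) \<inter> cverts (tail_cycle x0) = cnth ws ` {j \<in> {0..<int (length ws)}. step dvd j - s}"
proof -
  have "cnth ws j \<in> cnth ws ` {j \<in> {0..<int (length ws)}. step dvd j - s}" if "step dvd j - s" for j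
  proof (rule image_eqI)
    show "cnth ws j = cnth ws (j mod int (length ws))" by simp
    have "int (length ws) dvd j mod int (length ws) - j" by (simp add: mod_eq_dvd_iff[symmetric])
    then have "step dvd (j mod int (length ws) - j) + (j - s)"
      using dvd_add[OF dvd_trans[OF step(2)] that] by blast
    then show "j mod int (length ws) \<in> {j \<in> {0..<int (length ws)}. step dvd j - s}"
      using alt_list_nonempty[OF alt_list_ws] by simp
  qed
  then have "cnth ws ` common_idx \<subseteq> cnth ws ` {j \<in> {0..<int (length ws)}. step dvd j - s}"
    unfolding step(3) by blast
  moreover have "cnth ws ` {j \<in> {0..<int (length ws)}. step dvd j - s} \<subseteq> cnth ws ` common_idx"
    unfolding step(3) by (rule image_mono) blast
  ultimately have "cnth ws ` common_idx = cnth ws ` {j \<in> {0..<int (length ws)}. step dvd j - s}"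
    by (rule subset_antisym)
  moreover have "cverts (head_cycle x0) \<inter> cverts (tail_cycle x0) = cnth ws ` common_idx"
    unfolding cverts_head_cycle_x0 common_idx_def by blast
  ultimately show ?thesis by simp
qed

lemma att_eq_length_div_step: "int (att V E G) = int (length ws) div step"
proof -
  have "inj_on (cnth ws) {j \<in> {0..<int (length ws)}. step dvd j - s}"
    using cnth_eq_iff[OF alt_list_distinct[OF alt_list_ws] alt_list_nonempty[OF alt_list_ws]]
    by (auto intro!: inj_onI)
  then have "att V E G = card {j \<in> {0..<int (length ws)}. step dvd j - s}"
    using att_eq[OF x0_in_V] cverts_head_inter_tail_cycle_x0 card_image by simp
  then show ?thesis using card_residue_class_atLeastLessThan[OF step(1,2)] step(1,2)
    by (simp add: pos_imp_zdiv_nonneg_iff)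
qed

lemma att_dvd_rad_iff_even_step: "att V E G dvd rad V E G \<longleftrightarrow> even step"
proof -
  have "int (length ws) = step * int (att V E G)"
    using att_eq_length_div_step step(2) by simp
  moreover have "0 < int (att V E G)" using att_pos by simp
  moreover have "even (int (length ws))" using alt_list_even_length[OF alt_list_ws] by simp
  ultimately have half: "int (att V E G) dvd int (length ws) div 2 \<longleftrightarrow> even step"
    using dvd_half_iff_even_cofactor by blast
  have "att V E G dvd rad V E G \<longleftrightarrow> int (att V E G) dvd int (rad V E G)"
    by (rule int_dvd_int_iff[symmetric])
  also have "int (rad V E G) = int (length ws) div 2"
    using two_rad_eq_length by linarith
  finally show ?thesis using half by simp
qed

lemma swap_imp_odd_step:
  assumes "w \<in> V" and "head_cycle w = tail_cycle x0" and "tail_cycle w = head_cycle x0"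
  shows "odd step"
proof -
  have "w \<in> cverts (tail_cycle x0)" "w \<in> cverts (head_cycle x0)" "is_tail (head_cycle x0) w"
    using head_cycle[OF assms(1)] tail_cycle[OF assms(1)] assms(2,3) by simp_all
  then obtain j where "w = cnth ws j" "j \<in> common_idx"
    unfolding cverts_head_cycle_x0 common_idx_def by blast
  have "\<not> is_head (cycle_edges ws) (cnth ws j)"
    using \<open>is_tail (head_cycle x0) w\<close> \<open>w = cnth ws j\<close> cycle_edges_ws in_nbrs_ne_out_nbrs[OF assms(1)]
    by simp
  then have "odd (j - s)" using alt_list_head_iff_even_diff[OF alt_list_ws, of j s] head_at_s by simp
  moreover have "step dvd j - s" using \<open>j \<in> common_idx\<close> step(3) by simp
  ultimately show "odd step" using dvd_trans[of 2 step "j - s"] by blast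
qed

lemma odd_step_imp_swap:
  assumes "odd step"
  shows "\<exists>w\<in>V. head_cycle w = tail_cycle x0 \<and> tail_cycle w = head_cycle x0"
proof -
  let ?w = "cnth ws (s + step)"
  have "?w \<in> V" using alt_list_in_V[OF alt_list_ws] .
  have "s + step \<in> common_idx" using step(3) by simp
  then have "?w \<in> cverts (tail_cycle x0)" unfolding common_idx_def by simp
  have "?w \<in> cverts (head_cycle x0)" using cverts_head_cycle_x0 by simp
  moreover have "\<not> is_head (head_cycle x0) ?w"
    using alt_list_head_iff_even_diff[OF alt_list_ws, of "s + step" s] head_at_s assms cycle_edges_ws
    by simp
  ultimately have "head_cycle x0 = tail_cycle ?w"
    using tail_cycle_eqI alt_cycle_head_or_tail head_cycle[OF x0_in_V] by blast
  moreover have "tail_cycle x0 = head_cycle ?w \<or> tail_cycle x0 = tail_cycle ?w"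
    using alt_cycle_through_cases tail_cycle[OF x0_in_V] \<open>?w \<in> cverts (tail_cycle x0)\<close> by blast
  ultimately have "tail_cycle x0 = head_cycle ?w" using head_cycle_ne_tail_cycle[OF x0_in_V] by auto
  then show ?thesis using \<open>head_cycle x0 = tail_cycle ?w\<close> \<open>?w \<in> V\<close> by auto
qed

end

context tetravalent_half_arc_transitive
begin

lemma arc_transitive_cyc_act_iff:
  "arc_transitive (cyc_act ` G) ACs (alt_adj V E G) \<longleftrightarrow> \<not> att V E G dvd rad V E G"
proof -
  obtain ws where "alt_list ws" using ex_alt_list by blast
  then obtain s where "is_head (cycle_edges ws) (cnth ws s)"
    using alt_list_head_succ_iff[of ws 0] by auto
  then interpret alt_cycle_at_head V E G ws s
    using \<open>alt_list ws\<close> by unfold_locales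
  have "arc_transitive (cyc_act ` G) ACs (alt_adj V E G) \<longleftrightarrow> odd step"
    using arc_transitive_cyc_act_if_swap[OF x0_in_V] swap_if_arc_transitive_cyc_act[OF x0_in_V]
      swap_imp_odd_step odd_step_imp_swap by blast
  then show ?thesis using att_dvd_rad_iff_even_step by simp
qed

end

theorem proposition2p1:
  fixes V :: "'a set" and E :: "'a \<Rightarrow> 'a \<Rightarrow> bool" and G :: "('a \<Rightarrow> 'a) set"
  assumes "simple_graph V E" and "connected_graph V E" and "tetravalent V E"
    and "subgroup G (BijGroup V)" and "G \<subseteq> Aut V E"
    and "half_arc_transitive V E G"
    and "card (alt_cycles V E G) \<ge> 3"
  shows "(\<forall>C\<in>alt_cycles V E G.
            real (card {D. alt_adj V E G C D}) = 2 * real (rad V E G) / real (att V E G))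
       \<and> (\<forall>g\<in>G. \<forall>C\<in>alt_cycles V E G. cyc_act g C \<in> alt_cycles V E G)
       \<and> vertex_transitive (cyc_act ` G) (alt_cycles V E G)
       \<and> edge_transitive (cyc_act ` G) (alt_cycles V E G) (alt_adj V E G)
       \<and> (arc_transitive (cyc_act ` G) (alt_cycles V E G) (alt_adj V E G)
            \<longleftrightarrow> \<not> att V E G dvd rad V E G)"
proof -
  interpret tetravalent_half_arc_transitive V E G
    by (rule tetravalent_half_arc_transitive.intro) (fact assms)+
  show ?thesis
    using valence_eq cyc_act_alt_cycle vertex_transitive_cyc_act edge_transitive_cyc_act
      arc_transitive_cyc_act_iff by blast
qed

end
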